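(* For any $K>0$ and $\varepsilon>0$ the following holds. Let $(\Sigma,f,E,A)$ be a two-dimensional periodic linear cocycle that is diagonalizable with positive eigenvalues, bounded by $K$, and admitting no dominated splitting. Then there exist a point $X\in\Sigma$ and a continuous path $\gamma:[0,1]\to C(X)$ such that: (1) $\gamma(0)=A|_{\mathcal{O}(X)}$; (2) $\mathrm{diam}(\gamma)<\varepsilon$; (3) $\det\widetilde{\gamma(t)}$ is independent of $t$; (4) writing $\lambda_m(t)\le\lambda_b(t)$ for the absolute values of the eigenvalues of $\widetilde{\gamma(t)}$, for $s<t$ one has $\lambda_m(s)\le\lambda_m(t)$ and $\lambda_b(s)\ge\lambda_b(t)$; (5) $\widetilde{\gamma(1)}$ has two non-real complex eigenvalues.
   Context: A linear cocycle $(\Sigma,f,E,A)$ consists of a topological space $\Sigma$, a homeomorphism $f$ of $\Sigma$, a Riemannian vector bundle $E$ over $\Sigma$ (here of rank $2$), and linear isomorphisms $A(x):E(x)\to E(f(x))$; $A^n(x)$ denotes the composition along the orbit. It is periodic if every $x\in\Sigma$ is $f$-periodic; diagonalizable with positive eigenvalues if at each $x$ the return map $A^{\mathrm{per}(x)}(x)$ is diagonalizable with positive real eigenvalues. It is bounded by $K$ if $\sup_x\|A(x)\|<K$ and $\sup_x\|A(x)^{-1}\|<K$. It admits a dominated splitting if $E=F\oplus G$ with $F,G$ non-trivial $A$-invariant subbundles and some $n\ge1$ with $\|A^n(x)|_F\|\,\|A^{-n}(f^n(x))|_G\|<1/2$ for all $x$. For $X\in\Sigma$ with orbit $\mathcal{O}(X)$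 and period $p$, $C(X)$ is the set of families $\sigma=(\sigma(x))_{x\in\mathcal{O}(X)}$ of linear isomorphisms $\sigma(x):E(x)\to E(f(x))$, with distance $\mathrm{dist}(\sigma_1,\sigma_2)=\max\{\max_x\|\sigma_1(x)-\sigma_2(x)\|,\max_x\|\sigma_1(x)^{-1}-\sigma_2(x)^{-1}\|\}$; $\mathrm{diam}(\gamma)=\max_{s,t}\mathrm{dist}(\gamma(s),\gamma(t))$; $\tilde\sigma=\sigma(f^{p-1}(X))\circ\cdots\circ\sigma(X)$ is the first return map. *)

theory Defs
  imports "HOL-Analysis.Analysis"
begin

text \<open>Rank-2 Riemannian bundle over Sigma modelled (fiberwise via orthonormal frames)
  as the trivial bundle Sigma x R^2; linear maps E(x) -> E(f x) are 2x2 real matrices.\<close>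

type_synonym mat2 = "real^2^2"

definition opnorm :: "mat2 \<Rightarrow> real" where
  "opnorm M = onorm (\<lambda>v. M *v v)"

definition restr_norm :: "mat2 \<Rightarrow> (real^2) set \<Rightarrow> real" where
  "restr_norm M S = Sup ((\<lambda>v. norm (M *v v)) ` {v \<in> S. norm v = 1})"

fun cocycle_pow :: "('a \<Rightarrow> mat2) \<Rightarrow> ('a \<Rightarrow> 'a) \<Rightarrow> nat \<Rightarrow> 'a \<Rightarrow> mat2" where
  "cocycle_pow A f 0 x = mat 1"
| "cocycle_pow A f (Suc n) x = A ((f ^^ n) x) ** cocycle_pow A f n x"

definition is_linear_cocycle :: "('a::topological_space \<Rightarrow> 'a) \<Rightarrow> ('a \<Rightarrow> mat2) \<Rightarrow> bool" where
  "is_linear_cocycle f A \<longleftrightarrow> (\<exists>g. homeomorphism UNIV UNIV f g) \<and> (\<forall>x. invertible (A x))"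

definition periodic_map :: "('a \<Rightarrow> 'a) \<Rightarrow> bool" where
  "periodic_map f \<longleftrightarrow> (\<forall>x. \<exists>p>0. (f ^^ p) x = x)"

definition period :: "('a \<Rightarrow> 'a) \<Rightarrow> 'a \<Rightarrow> nat" where
  "period f x = (LEAST p. p > 0 \<and> (f ^^ p) x = x)"

definition orbit :: "('a \<Rightarrow> 'a) \<Rightarrow> 'a \<Rightarrow> 'a set" where
  "orbit f x = range (\<lambda>k. (f ^^ k) x)"

definition return_map :: "('a \<Rightarrow> 'a) \<Rightarrow> ('a \<Rightarrow> mat2) \<Rightarrow> 'a \<Rightarrow> mat2" where
  "return_map f \<sigma> X = cocycle_pow \<sigma> f (period f X) X"

definition diagonalizable_pos :: "('a \<Rightarrow> 'a) \<Rightarrow> ('a \<Rightarrow> mat2) \<Rightarrow> bool" where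
  "diagonalizable_pos f A \<longleftrightarrow>
     (\<forall>x. \<exists>(P::mat2) (d::2 \<Rightarrow> real). invertible P \<and> (\<forall>i. d i > (0::real)) \<and>
        return_map f A x = P ** (\<chi> i j. if i = j then d i else 0) ** matrix_inv P)"

definition bounded_by :: "('a \<Rightarrow> mat2) \<Rightarrow> real \<Rightarrow> bool" where
  "bounded_by A K \<longleftrightarrow>
     (\<exists>K'<K. \<forall>x. opnorm (A x) \<le> K') \<and> (\<exists>K'<K. \<forall>x. opnorm (matrix_inv (A x)) \<le> K')"

definition dominated_splitting :: "('a \<Rightarrow> 'a) \<Rightarrow> ('a \<Rightarrow> mat2) \<Rightarrow> bool" where
  "dominated_splitting f A \<longleftrightarrow>
     (\<exists>F G :: 'a \<Rightarrow> (real^2) set.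
        (\<forall>x. subspace (F x) \<and> subspace (G x) \<and> F x \<noteq> {0} \<and> G x \<noteq> {0}
             \<and> F x \<inter> G x = {0} \<and> (\<forall>v. \<exists>u\<in>F x. \<exists>w\<in>G x. v = u + w)
             \<and> (\<lambda>v. A x *v v) ` F x = F (f x) \<and> (\<lambda>v. A x *v v) ` G x = G (f x))
      \<and> (\<exists>n\<ge>1. \<forall>x. restr_norm (cocycle_pow A f n x) (F x)
                   * restr_norm (matrix_inv (cocycle_pow A f n x)) (G ((f ^^ n) x)) < 1/2))"

definition cdist :: "('a \<Rightarrow> 'a) \<Rightarrow> 'a \<Rightarrow> ('a \<Rightarrow> mat2) \<Rightarrow> ('a \<Rightarrow> mat2) \<Rightarrow> real" where
  "cdist f X \<sigma>1 \<sigma>2 = max (Max ((\<lambda>x. opnorm (\<sigma>1 x - \<sigma>2 x)) ` orbit f X))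
                          (Max ((\<lambda>x. opnorm (matrix_inv (\<sigma>1 x) - matrix_inv (\<sigma>2 x))) ` orbit f X))"

definition in_C :: "('a \<Rightarrow> 'a) \<Rightarrow> 'a \<Rightarrow> ('a \<Rightarrow> mat2) \<Rightarrow> bool" where
  "in_C f X \<sigma> \<longleftrightarrow> (\<forall>x\<in>orbit f X. invertible (\<sigma> x))"

definition C_path :: "('a \<Rightarrow> 'a) \<Rightarrow> 'a \<Rightarrow> (real \<Rightarrow> 'a \<Rightarrow> mat2) \<Rightarrow> bool" where
  "C_path f X \<gamma> \<longleftrightarrow> (\<forall>t\<in>{0..1}. in_C f X (\<gamma> t)) \<and>
     (\<forall>t\<in>{0..1}. \<forall>e>0. \<exists>d>0. \<forall>s\<in>{0..1}. \<bar>s - t\<bar> < d \<longrightarrow> cdist f X (\<gamma> s) (\<gamma> t) < e)"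

definition C_diam :: "('a \<Rightarrow> 'a) \<Rightarrow> 'a \<Rightarrow> (real \<Rightarrow> 'a \<Rightarrow> mat2) \<Rightarrow> real" where
  "C_diam f X \<gamma> = Sup {cdist f X (\<gamma> s) (\<gamma> t) | s t. s \<in> {0..1} \<and> t \<in> {0..1}}"

definition cx_eigenvalues :: "mat2 \<Rightarrow> complex set" where
  "cx_eigenvalues M = {z. det (mat z - (\<chi> i j. complex_of_real (M $ i $ j))) = 0}"

definition lam_m :: "mat2 \<Rightarrow> real" where
  "lam_m M = Min (cmod ` cx_eigenvalues M)"

definition lam_b :: "mat2 \<Rightarrow> real" where
  "lam_b M = Max (cmod ` cx_eigenvalues M)"

end

theory Submission
  imports Defs
begin

text \<open>
  Suppose no orbit carries such a path. Composing the cocycle with small rotations along an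
  orbit (possibly conjugated by a shear) moves the trace of the return map continuously while
  keeping its determinant, and a trace below \<open>2 sqrt det\<close> means non-real eigenvalues; so every such
  attempt must fail to reach that threshold. At every periodic point this yields, quantitatively:
  the eigenvalues of the return map are separated by the factor \<open>(cos \<theta>0)\<^sup>2\<close> and their
  eigendirections are uniformly transverse (a single rotation by \<open>\<theta>0\<close> fails); within a period the
  ratio of the expansions along the two eigendirections stays bounded (a rotation followed by the
  same rotation after a shear fails); and this ratio cannot stay in a bounded band over a long
  stretch of time (a quarter turn spread over the stretch fails). Hence after a fixed time the
  ratio is below \<open>1/2\<close> everywhere, and the eigendirections form a dominated splitting.
\<close>

definition M2 :: "real \<Rightarrow> real \<Rightarrow> real \<Rightarrow> real \<Rightarrow> mat2" where
  "M2 a b c d = (\<chi> i j. if i = 1 then (if j = 1 then a else b) else (if j = 1 then c else d))"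

definition V2 :: "real \<Rightarrow> real \<Rightarrow> real^2" where
  "V2 x y = (\<chi> i. if i = 1 then x else y)"

lemma one_neq_two_2 [simp]: "(1::2) \<noteq> 2" "(2::2) \<noteq> 1"
  by (simp_all add: eq_commute)

lemma M2_nth [simp]:
  "M2 a b c d $ 1 $ 1 = a" "M2 a b c d $ 1 $ 2 = b" "M2 a b c d $ 2 $ 1 = c" "M2 a b c d $ 2 $ 2 = d"
  by (simp_all add: M2_def)

lemma V2_nth [simp]: "V2 x y $ 1 = x" "V2 x y $ 2 = y"
  by (simp_all add: V2_def)

lemma M2_eta: "M = M2 (M$1$1) (M$1$2) (M$2$1) (M$2$2)"
  unfolding M2_def by (simp add: vec_eq_iff forall_2)

lemma V2_eta: "v = V2 (v$1) (v$2)"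
  unfolding V2_def by (simp add: vec_eq_iff forall_2)

lemma M2_eq_iff: "M2 a b c d = M2 a' b' c' d' \<longleftrightarrow> a = a' \<and> b = b' \<and> c = c' \<and> d = d'"
  by (metis M2_nth)

lemma V2_eq_iff: "V2 a b = V2 a' b' \<longleftrightarrow> a = a' \<and> b = b'"
  by (metis V2_nth)

lemma M2_mult [simp]: "M2 a b c d ** M2 e f g h = M2 (a*e+b*g) (a*f+b*h) (c*e+d*g) (c*f+d*h)"
  by (simp add: vec_eq_iff forall_2 matrix_matrix_mult_def sum_2)

lemma M2_mult_V2 [simp]: "M2 a b c d *v V2 x y = V2 (a*x+b*y) (c*x+d*y)"
  by (simp add: vec_eq_iff forall_2 matrix_vector_mult_def sum_2)

lemma mat1_M2: "(mat 1 :: mat2) = M2 1 0 0 1"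
  by (simp add: vec_eq_iff forall_2 mat_def)

lemma M2_diff [simp]: "M2 a b c d - M2 e f g h = M2 (a-e) (b-f) (c-g) (d-h)"
  by (simp add: vec_eq_iff forall_2)

lemma V2_add [simp]: "V2 a b + V2 c d = V2 (a+c) (b+d)"
  by (simp add: vec_eq_iff forall_2)

lemma V2_scale [simp]: "r *\<^sub>R V2 a b = V2 (r*a) (r*b)" "r *s V2 a b = V2 (r*a) (r*b)"
  by (simp_all add: vec_eq_iff forall_2)

lemma det_M2 [simp]: "det (M2 a b c d) = a*d - b*c"
  by (simp add: det_2)

lemma norm_V2: "norm (V2 x y) = sqrt (x^2 + y^2)"
  by (simp add: norm_vec_def L2_set_def sum_2)

lemma inner_V2: "V2 a b \<bullet> V2 c d = a*c + b*d"
  by (simp add: inner_vec_def sum_2)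

lemma invertible_iff_det: "invertible (M::mat2) \<longleftrightarrow> det M \<noteq> 0"
  by (simp add: invertible_det_nz)

lemma invertible_mat1 [simp]: "invertible (mat 1 :: mat2)"
  by (simp add: invertible_iff_det)

lemma matrix_inv_unique:
  fixes M N :: mat2
  assumes "M ** N = mat 1" "N ** M = mat 1"
  shows "matrix_inv M = N"
proof -
  let ?P = "\<lambda>A'::mat2. M ** A' = mat 1 \<and> A' ** M = mat 1"
  have inv: "?P (matrix_inv M)" unfolding matrix_inv_def by (rule someI[of ?P N]) (use assms in auto)
  hence "matrix_inv M = matrix_inv M ** (M ** N)" using assms by simp
  also have "\<dots> = (matrix_inv M ** M) ** N" by (simp add: matrix_mul_assoc)
  also have "\<dots> = N" using inv by simp
  finally show ?thesis .
qed

lemma matrix_inv_left: "invertible (M::mat2) \<Longrightarrow> matrix_inv M ** M = mat 1"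
  and matrix_inv_right: "invertible (M::mat2) \<Longrightarrow> M ** matrix_inv M = mat 1"
proof -
  assume "invertible M"
  then obtain N where "M ** N = mat 1" "N ** M = mat 1" unfolding invertible_def by blast
  with matrix_inv_unique show "matrix_inv M ** M = mat 1" "M ** matrix_inv M = mat 1" by auto
qed

lemma matrix_inv_cancel_left: "invertible (P::mat2) \<Longrightarrow> matrix_inv P ** (P ** Z) = Z"
  by (simp add: matrix_mul_assoc matrix_inv_left)

lemma matrix_inv_cancel_right: "invertible (P::mat2) \<Longrightarrow> P ** (matrix_inv P ** Z) = Z"
  by (simp add: matrix_mul_assoc matrix_inv_right)

lemma matrix_inv_vector_cancel: "invertible (M::mat2) \<Longrightarrow> M *v (matrix_inv M *v w) = w"
  by (simp add: matrix_vector_mul_assoc matrix_inv_right)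

lemma invertible_matrix_inv: "invertible (M::mat2) \<Longrightarrow> invertible (matrix_inv M)"
  using matrix_inv_left matrix_inv_right unfolding invertible_def by blast

lemma matrix_inv_mult:
  fixes A B :: mat2
  assumes "invertible A" "invertible B"
  shows "matrix_inv (A ** B) = matrix_inv B ** matrix_inv A"
  by (rule matrix_inv_unique)
    (simp_all add: matrix_mul_assoc[symmetric] matrix_inv_cancel_left matrix_inv_cancel_right assms,
     simp_all add: matrix_mul_assoc matrix_inv_left matrix_inv_right assms)

lemma matrix_inv_M2:
  assumes "a*d - b*c \<noteq> 0"
  shows "matrix_inv (M2 a b c d) = M2 (d/(a*d-b*c)) (-b/(a*d-b*c)) (-c/(a*d-b*c)) (a/(a*d-b*c))"
proof -
  define k where "k = a*d - b*c"
  have k: "a*d - b*c = k" "k \<noteq> 0" using assms by (simp_all add: k_def)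
  have e1: "a * (d / k) + b * (- c / k) = 1" "c * (- b / k) + d * (a / k) = 1"
           "d / k * a + - b / k * c = 1" "- c / k * b + a / k * d = 1"
   and e0: "a * (- b / k) + b * (a / k) = 0" "c * (d / k) + d * (- c / k) = 0"
           "d / k * b + - b / k * d = 0" "- c / k * a + a / k * c = 0"
    using k by (simp_all add: field_simps)
  have "matrix_inv (M2 a b c d) = M2 (d/k) (-b/k) (-c/k) (a/k)"
    by (rule matrix_inv_unique; unfold M2_mult e0 e1 mat1_M2; rule refl)
  thus ?thesis by (simp add: k_def)
qed

lemma det_matrix_inv: "invertible (M::mat2) \<Longrightarrow> det (matrix_inv M) * det M = 1"
  using det_mul[of "matrix_inv M" M] by (simp add: matrix_inv_left)

lemma mat_diff_left_distrib: "(A::mat2) ** (B - C) = A ** B - A ** C"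
  by (simp add: matrix_matrix_mult_def vec_eq_iff sum_2 algebra_simps)

lemma mat_diff_right_distrib: "((B::mat2) - C) ** A = B ** A - C ** A"
  by (simp add: matrix_matrix_mult_def vec_eq_iff sum_2 algebra_simps)

lemma matrix_vector_invertible_nonzero: "invertible (M::mat2) \<Longrightarrow> v \<noteq> 0 \<Longrightarrow> M *v v \<noteq> 0"
  by (metis matrix_inv_vector_cancel invertible_matrix_inv matrix_vector_mult_0_right)

definition cond_num :: "mat2 \<Rightarrow> real" where
  "cond_num Q = opnorm Q * opnorm (matrix_inv Q)"

lemma bounded_linear_matrix_vector: "bounded_linear (\<lambda>v. (M::mat2) *v v)"
  by (simp add: matrix_vector_mul_bounded_linear)

lemma opnorm_nonneg: "0 \<le> opnorm M"
  unfolding opnorm_def by (rule onorm_pos_le[OF bounded_linear_matrix_vector])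

lemma cond_num_nonneg: "0 \<le> cond_num Q"
  by (simp add: cond_num_def opnorm_nonneg)

lemma opnorm_mult_le: "opnorm (A ** B) \<le> opnorm A * opnorm B"
proof -
  have "(\<lambda>v. (A ** B) *v v) = (\<lambda>v. A *v v) \<circ> (\<lambda>v. B *v v)"
    by (simp add: o_def matrix_vector_mul_assoc)
  thus ?thesis unfolding opnorm_def
    using onorm_compose[OF bounded_linear_matrix_vector bounded_linear_matrix_vector] by simp
qed

lemma opnorm_mult3_le: "opnorm (A ** B ** C) \<le> opnorm A * opnorm B * opnorm C"
  by (meson opnorm_mult_le opnorm_nonneg mult_right_mono order_trans)

text \<open>The operator norm is bounded by the Frobenius norm (Cauchy--Schwarz in each row).\<close>

lemma opnorm_M2_le: "opnorm (M2 a b c d) \<le> sqrt (a^2+b^2+c^2+d^2)"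
  unfolding opnorm_def
proof (rule onorm_le)
  fix v :: "real^2"
  obtain x y where v: "v = V2 x y" using V2_eta by blast
  have "(a*x+b*y)^2 + (c*x+d*y)^2 + ((a*y - b*x)^2 + (c*y - d*x)^2)
        = (a^2+b^2+c^2+d^2) * (x^2+y^2)"
    by (simp add: power2_eq_square algebra_simps)
  hence "(a*x+b*y)^2 + (c*x+d*y)^2 \<le> (a^2+b^2+c^2+d^2) * (x^2+y^2)"
    by (smt (verit) zero_le_power2)
  hence "sqrt ((a*x+b*y)^2 + (c*x+d*y)^2) \<le> sqrt ((a^2+b^2+c^2+d^2) * (x^2+y^2))"
    using real_sqrt_le_mono by blast
  thus "norm (M2 a b c d *v v) \<le> sqrt (a^2+b^2+c^2+d^2) * norm v"
    by (simp add: v norm_V2 real_sqrt_mult)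
qed

lemma opnorm_zero [simp]: "opnorm (0::mat2) = 0"
  using opnorm_M2_le[of 0 0 0 0] opnorm_nonneg[of 0]
  by (simp add: M2_def zero_vec_def vec_eq_iff forall_2)

text \<open>Both \<open>Q\<close> and its inverse \<open>adj Q / det Q\<close> have Frobenius norm \<open>\<le> sqrt F\<close>, resp. \<open>sqrt F / \<bar>det Q\<bar>\<close>.\<close>

lemma cond_num_le_frobenius:
  assumes "det Q \<noteq> 0"
  shows "cond_num Q \<le> (Q$1$1^2 + Q$1$2^2 + Q$2$1^2 + Q$2$2^2) / \<bar>det Q\<bar>"
proof -
  obtain a b c d where Q: "Q = M2 a b c d" using M2_eta by blast
  let ?F = "a^2 + b^2 + c^2 + d^2" and ?D = "a*d - b*c"
  have D: "?D \<noteq> 0" using assms Q by simp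
  have "opnorm (matrix_inv Q) \<le> sqrt ((d/?D)^2 + (-b/?D)^2 + (-c/?D)^2 + (a/?D)^2)"
    unfolding Q matrix_inv_M2[OF D] by (rule opnorm_M2_le)
  also have "(d/?D)^2 + (-b/?D)^2 + (-c/?D)^2 + (a/?D)^2 = ?F / ?D^2"
    by (simp add: power_divide add_divide_distrib[symmetric] algebra_simps)
  finally have inv: "opnorm (matrix_inv Q) \<le> sqrt ?F / \<bar>?D\<bar>" by (simp add: real_sqrt_divide)
  have "cond_num Q \<le> sqrt ?F * (sqrt ?F / \<bar>?D\<bar>)"
    unfolding cond_num_def using opnorm_M2_le[of a b c d] inv opnorm_nonneg Q
    by (intro mult_mono) auto
  also have "\<dots> = ?F / \<bar>?D\<bar>" by (simp add: real_sqrt_mult[symmetric])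
  finally show ?thesis using Q by simp
qed

section \<open>Eigenvalues through trace and determinant\<close>

definition tr2 :: "mat2 \<Rightarrow> real" where "tr2 M = M$1$1 + M$2$2"

lemma tr2_M2 [simp]: "tr2 (M2 a b c d) = a + d" by (simp add: tr2_def)

lemma tr2_mult_commute: "tr2 (A ** B) = tr2 (B ** A)"
  by (simp add: tr2_def matrix_matrix_mult_def sum_2 algebra_simps)

lemma tr2_conj: "invertible Q \<Longrightarrow> tr2 (Q ** M ** matrix_inv Q) = tr2 M"
  using tr2_mult_commute[of Q "M ** matrix_inv Q"] by (simp add: matrix_mul_assoc[symmetric] matrix_inv_left)

lemma tr2_conj_inv: "invertible Q \<Longrightarrow> tr2 (matrix_inv Q ** M ** Q) = tr2 M"
  using tr2_mult_commute[of "matrix_inv Q" "M ** Q"] by (simp add: matrix_mul_assoc[symmetric] matrix_inv_right)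

lemma det_conj: "invertible (Q::mat2) \<Longrightarrow> det (Q ** M ** matrix_inv Q) = det M"
  using det_matrix_inv[of Q] by (simp add: det_mul mult.commute)

lemma det_conj_inv: "invertible (Q::mat2) \<Longrightarrow> det (matrix_inv Q ** M ** Q) = det M"
proof -
  assume Q: "invertible Q"
  have "det (matrix_inv Q ** M ** Q) = det M * (det (matrix_inv Q) * det Q)" by (simp add: det_mul)
  thus ?thesis using det_matrix_inv[OF Q] by simp
qed

lemma cx_eigenvalues_char_poly:
  "cx_eigenvalues M = {z. z^2 - complex_of_real (tr2 M) * z + complex_of_real (det M) = 0}"
proof -
  have "det (mat z - (\<chi> i j. complex_of_real (M $ i $ j))) =
        z^2 - complex_of_real (tr2 M) * z + complex_of_real (det M)" for z
    by (simp add: det_2 tr2_def mat_def power2_eq_square algebra_simps)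
  thus ?thesis unfolding cx_eigenvalues_def by simp
qed

lemma quadratic_factor:
  fixes a b z t d :: "'b::comm_ring_1"
  assumes "a + b = t" "a * b = d"
  shows "z^2 - t * z + d = (z - a) * (z - b)"
  using assms by (auto simp: power2_eq_square algebra_simps)

lemma cx_eigenvalues_nonreal:
  assumes "tr2 M ^ 2 < 4 * det M"
  defines "w \<equiv> sqrt (4 * det M - tr2 M ^ 2) / 2"
  shows "cx_eigenvalues M = {Complex (tr2 M / 2) w, Complex (tr2 M / 2) (- w)}"
    and "w > 0"
    and "cmod ` cx_eigenvalues M = {sqrt (det M)}"
proof -
  let ?t = "tr2 M" and ?d = "det M"
  have w2: "(?t/2)^2 + w^2 = ?d" unfolding w_def using assms(1) by (simp add: power_divide field_simps)
  show "w > 0" unfolding w_def using assms(1) by simp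
  have "z^2 - complex_of_real ?t * z + complex_of_real ?d =
        (z - Complex (?t/2) w) * (z - Complex (?t/2) (-w))" for z
    by (rule quadratic_factor) (use w2 in \<open>simp_all add: complex_eq_iff power2_eq_square\<close>)
  thus eig: "cx_eigenvalues M = {Complex (tr2 M / 2) w, Complex (tr2 M / 2) (- w)}"
    unfolding cx_eigenvalues_char_poly by auto
  show "cmod ` cx_eigenvalues M = {sqrt (det M)}"
    unfolding eig using w2 by (simp add: cmod_def)
qed

lemma cx_eigenvalues_real:
  assumes "4 * det M \<le> tr2 M ^ 2"
  defines "s \<equiv> sqrt (tr2 M ^ 2 - 4 * det M)"
  shows "cx_eigenvalues M = {complex_of_real ((tr2 M - s)/2), complex_of_real ((tr2 M + s)/2)}"
proof -
  let ?t = "tr2 M" and ?d = "det M"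
  have s2: "s^2 = ?t^2 - 4 * ?d" unfolding s_def using assms(1) by simp
  have "z^2 - complex_of_real ?t * z + complex_of_real ?d =
        (z - complex_of_real ((?t - s)/2)) * (z - complex_of_real ((?t + s)/2))" for z
  proof (rule quadratic_factor)
    show "complex_of_real ((?t - s)/2) + complex_of_real ((?t + s)/2) = complex_of_real ?t"
      by (simp add: field_simps)
    have "(?t - s)/2 * ((?t + s)/2) = ?d" using s2 by (simp add: power2_eq_square field_simps)
    thus "complex_of_real ((?t - s)/2) * complex_of_real ((?t + s)/2) = complex_of_real ?d"
      by (metis of_real_mult)
  qed
  thus ?thesis unfolding cx_eigenvalues_char_poly by auto
qed

definition root_mod_min :: "real \<Rightarrow> real \<Rightarrow> real" where
  "root_mod_min T D = (if 4 * D \<le> T^2 then (T - sqrt (T^2 - 4*D))/2 else sqrt D)"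

definition root_mod_max :: "real \<Rightarrow> real \<Rightarrow> real" where
  "root_mod_max T D = (if 4 * D \<le> T^2 then (T + sqrt (T^2 - 4*D))/2 else sqrt D)"

lemma lam_m_lam_b_eq:
  assumes D: "det M > 0" and T: "tr2 M \<ge> 0"
  shows "lam_m M = root_mod_min (tr2 M) (det M)" "lam_b M = root_mod_max (tr2 M) (det M)"
proof -
  let ?t = "tr2 M" and ?d = "det M"
  have "lam_m M = root_mod_min ?t ?d \<and> lam_b M = root_mod_max ?t ?d"
  proof (cases "4 * ?d \<le> ?t^2")
    case True
    define s where "s = sqrt (?t^2 - 4 * ?d)"
    have s0: "0 \<le> s" unfolding s_def using True by simp
    have "s^2 < ?t^2" unfolding s_def using True D by simp
    hence "s < ?t" using T by (rule power_less_imp_less_base)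
    hence "cmod (complex_of_real ((?t - s)/2)) = (?t - s)/2"
          "cmod (complex_of_real ((?t + s)/2)) = (?t + s)/2"
      using s0 by (simp_all only: norm_of_real abs_of_nonneg) simp_all
    hence "cmod ` cx_eigenvalues M = {(?t - s)/2, (?t + s)/2}"
      using cx_eigenvalues_real[OF True] by (simp only: s_def image_insert image_empty)
    thus ?thesis unfolding lam_m_def lam_b_def root_mod_min_def root_mod_max_def
      using True s0 s_def by (simp add: min_def max_def)
  next
    case False
    hence "cmod ` cx_eigenvalues M = {sqrt ?d}" by (intro cx_eigenvalues_nonreal) simp
    thus ?thesis unfolding lam_m_def lam_b_def root_mod_min_def root_mod_max_def using False by simp
  qed
  thus "lam_m M = root_mod_min (tr2 M) (det M)" "lam_b M = root_mod_max (tr2 M) (det M)" by auto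
qed

lemma root_mod_max_ge_sqrt:
  assumes "0 < D" "0 \<le> T"
  shows "sqrt D \<le> root_mod_max T D"
proof (cases "4 * D \<le> T^2")
  case True
  have "(2 * sqrt D)^2 \<le> T^2" using True assms by (simp add: power_mult_distrib)
  hence "2 * sqrt D \<le> T" using assms(2) by (rule power2_le_imp_le)
  moreover have "0 \<le> sqrt (T^2 - 4*D)" using True by simp
  ultimately have "sqrt D \<le> (T + sqrt (T^2 - 4*D))/2" by argo
  thus ?thesis using True by (simp add: root_mod_max_def)
qed (simp add: root_mod_max_def)

lemma root_mod_min_eq:
  assumes "0 < D" "0 \<le> T"
  shows "root_mod_min T D = D / root_mod_max T D"
proof -
  have pos: "0 < root_mod_max T D"
    using root_mod_max_ge_sqrt[OF assms] assms(1) by (meson order_less_le_trans real_sqrt_gt_zero)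
  have "root_mod_min T D * root_mod_max T D = D"
  proof (cases "4 * D \<le> T^2")
    case True
    thus ?thesis by (simp add: root_mod_min_def root_mod_max_def algebra_simps power2_eq_square[symmetric])
  next
    case False
    thus ?thesis using assms(1) by (simp add: root_mod_min_def root_mod_max_def)
  qed
  thus ?thesis using pos by (simp add: field_simps)
qed

lemma root_mod_max_mono:
  assumes "0 < D" "0 \<le> T1" "T1 \<le> T2"
  shows "root_mod_max T1 D \<le> root_mod_max T2 D"
proof (cases "4 * D \<le> T1^2")
  case True
  moreover have "T1^2 \<le> T2^2" using assms(2,3) by (simp add: power_mono)
  ultimately have "4 * D \<le> T2^2" "sqrt (T1^2 - 4*D) \<le> sqrt (T2^2 - 4*D)" by simp_all
  moreover have "(T1 + sqrt (T1^2 - 4*D))/2 \<le> (T2 + sqrt (T2^2 - 4*D))/2"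
    using calculation(2) assms(3) by argo
  ultimately show ?thesis unfolding root_mod_max_def using True by simp
next
  case False
  thus ?thesis using root_mod_max_ge_sqrt[of D T2] assms by (simp add: root_mod_max_def)
qed

lemma root_mod_min_antimono:
  assumes "0 < D" "0 \<le> T1" "T1 \<le> T2"
  shows "root_mod_min T2 D \<le> root_mod_min T1 D"
proof -
  have "0 < root_mod_max T1 D"
    using root_mod_max_ge_sqrt[of D T1] assms by (meson order_less_le_trans real_sqrt_gt_zero)
  thus ?thesis unfolding root_mod_min_eq[OF assms(1,2)] root_mod_min_eq[OF assms(1) order_trans[OF assms(2,3)]]
    using root_mod_max_mono[OF assms] assms(1) by (intro divide_left_mono) auto
qed

lemma root_mod_sum_prod:
  assumes "0 < d1" "0 < d2"
  shows "root_mod_min (d1 + d2) (d1 * d2) = min d1 d2" "root_mod_max (d1 + d2) (d1 * d2) = max d1 d2"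
proof -
  have e: "(d1 + d2)^2 - 4 * (d1 * d2) = (d1 - d2)^2" by (simp add: power2_eq_square algebra_simps)
  hence "4 * (d1 * d2) \<le> (d1 + d2)^2" by (smt (verit) zero_le_power2)
  thus "root_mod_min (d1 + d2) (d1 * d2) = min d1 d2" "root_mod_max (d1 + d2) (d1 * d2) = max d1 d2"
    unfolding root_mod_min_def root_mod_max_def using e by (auto simp: min_def max_def)
qed

lemma funpow_funpow: "(f^^a) ((f^^b) x) = (f^^(a + b)) x"
  by (simp add: funpow_add)

lemma cocycle_pow_add:
  "cocycle_pow A f (a + b) x = cocycle_pow A f b ((f^^a) x) ** cocycle_pow A f a x"
  by (induction b) (simp_all add: funpow_funpow add.commute matrix_mul_assoc)

lemma cocycle_pow_invertible:
  assumes "\<And>x. invertible (A x)" shows "invertible (cocycle_pow A f n x)"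
  by (induction n) (simp_all add: invertible_iff_det det_mul assms[unfolded invertible_iff_det])

fun ordered_prod :: "(nat \<Rightarrow> mat2) \<Rightarrow> nat \<Rightarrow> mat2" where
  "ordered_prod B 0 = mat 1"
| "ordered_prod B (Suc m) = B m ** ordered_prod B m"

lemma ordered_prod_cong: "(\<And>k. k < n \<Longrightarrow> B k = C k) \<Longrightarrow> ordered_prod B n = ordered_prod C n"
  by (induction n) auto

lemma cocycle_pow_ordered_prod: "cocycle_pow A f n x = ordered_prod (\<lambda>k. A ((f^^k) x)) n"
  by (induction n) auto

lemma ordered_prod_add: "ordered_prod B (a + b) = ordered_prod (\<lambda>k. B (k + a)) b ** ordered_prod B a"
  by (induction b) (auto simp: matrix_mul_assoc add.commute)

lemma ordered_prod_insert_first: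
  assumes "0 < n" "\<And>k. 0 < k \<Longrightarrow> k < n \<Longrightarrow> E k = mat 1"
  shows "ordered_prod (\<lambda>k. B k ** E k) n = ordered_prod B n ** E 0"
  using assms
proof (induction n)
  case (Suc n)
  thus ?case by (cases "n = 0") (simp_all add: matrix_mul_assoc)
qed simp

definition rot :: "real \<Rightarrow> mat2" where "rot a = M2 (cos a) (- sin a) (sin a) (cos a)"

definition conj_rot :: "mat2 \<Rightarrow> real \<Rightarrow> mat2" where "conj_rot Q a = Q ** rot a ** matrix_inv Q"

lemma rot_add: "rot a ** rot b = rot (a + b)"
  by (simp add: rot_def cos_add sin_add M2_eq_iff algebra_simps)

lemma rot_0 [simp]: "rot 0 = mat 1" by (simp add: rot_def mat1_M2)

lemma det_rot: "det (rot a) = 1"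
  by (simp add: rot_def power2_eq_square[symmetric])

lemma invertible_rot: "invertible (rot a)" by (simp add: invertible_iff_det det_rot)

lemma conj_rot_0 [simp]: "invertible Q \<Longrightarrow> conj_rot Q 0 = mat 1"
  by (simp add: conj_rot_def matrix_inv_right)

lemma invertible_conj_rot: "invertible Q \<Longrightarrow> invertible (conj_rot Q a)"
  by (simp add: conj_rot_def invertible_mult invertible_rot invertible_matrix_inv)

lemma conj_rot_add: "invertible Q \<Longrightarrow> conj_rot Q a ** conj_rot Q b = conj_rot Q (a + b)"
  by (simp add: conj_rot_def matrix_mul_assoc[symmetric] matrix_inv_cancel_left)
    (simp add: matrix_mul_assoc rot_add)

lemma matrix_inv_conj_rot: "invertible Q \<Longrightarrow> matrix_inv (conj_rot Q a) = conj_rot Q (- a)"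
  by (rule matrix_inv_unique) (simp_all add: conj_rot_add)

lemma ordered_prod_conj_rot_telescope:
  assumes B: "\<And>k. invertible (B k)" and Q: "invertible Q"
  shows "ordered_prod (\<lambda>k. B k ** conj_rot (ordered_prod B k ** Q) (\<alpha> k)) m
         = ordered_prod B m ** Q ** rot (\<Sum>k<m. \<alpha> k) ** matrix_inv Q"
proof (induction m)
  case 0 show ?case by (simp add: Q matrix_inv_right)
next
  case (Suc m)
  let ?C = "ordered_prod B m ** Q"
  have "invertible (ordered_prod B m)" by (induction m) (simp_all add: B invertible_mult)
  hence C: "invertible ?C" using Q by (simp add: invertible_mult)
  have "ordered_prod (\<lambda>k. B k ** conj_rot (ordered_prod B k ** Q) (\<alpha> k)) (Suc m)
        = B m ** (?C ** (rot (\<alpha> m) ** (matrix_inv ?C ** (?C ** (rot (\<Sum>k<m. \<alpha> k) ** matrix_inv Q)))))"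
    using Suc by (simp add: conj_rot_def matrix_mul_assoc)
  also have "\<dots> = B m ** ?C ** rot (\<alpha> m + (\<Sum>k<m. \<alpha> k)) ** matrix_inv Q"
    by (simp only: matrix_inv_cancel_left[OF C]) (simp add: matrix_mul_assoc rot_add[symmetric])
  finally show ?case by (simp add: matrix_mul_assoc add.commute)
qed

lemma abs_sin_diff_le: "\<bar>sin (a::real) - sin b\<bar> \<le> \<bar>a - b\<bar>"
proof -
  have "\<bar>sin a - sin b\<bar> = 2 * \<bar>sin ((a - b) / 2)\<bar> * \<bar>cos ((a + b) / 2)\<bar>"
    by (simp add: sin_diff_sin abs_mult)
  also have "\<dots> \<le> 2 * \<bar>(a - b) / 2\<bar> * 1"
    by (intro mult_mono abs_sin_x_le_abs_x) auto
  finally show ?thesis by simp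
qed

lemma abs_cos_diff_le: "\<bar>cos (a::real) - cos b\<bar> \<le> \<bar>a - b\<bar>"
proof -
  have "\<bar>cos a - cos b\<bar> = 2 * \<bar>sin ((a + b) / 2)\<bar> * \<bar>sin ((b - a) / 2)\<bar>"
    by (simp add: cos_diff_cos abs_mult)
  also have "\<dots> \<le> 2 * 1 * \<bar>(b - a) / 2\<bar>"
    by (intro mult_mono abs_sin_x_le_abs_x) auto
  finally show ?thesis by simp
qed

lemma opnorm_rot_diff_le: "opnorm (rot a - rot b) \<le> 2 * \<bar>a - b\<bar>"
proof -
  let ?c = "cos a - cos b" and ?s = "sin a - sin b"
  have "opnorm (rot a - rot b) \<le> sqrt (?c^2 + (- ?s)^2 + ?s^2 + ?c^2)"
    using opnorm_M2_le[of ?c "- ?s" ?s ?c] by (simp add: rot_def)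
  also have "\<dots> \<le> sqrt ((2 * \<bar>a - b\<bar>)^2)"
  proof (rule real_sqrt_le_mono)
    have "?c^2 \<le> (a - b)^2" "?s^2 \<le> (a - b)^2"
      using abs_cos_diff_le[of a b] abs_sin_diff_le[of a b] by (simp_all add: abs_le_square_iff)
    thus "?c^2 + (- ?s)^2 + ?s^2 + ?c^2 \<le> (2 * \<bar>a - b\<bar>)^2"
      by (simp only: power2_minus power_mult_distrib power2_abs) simp
  qed
  also have "\<dots> = 2 * \<bar>a - b\<bar>" by (simp only: real_sqrt_abs) simp
  finally show ?thesis .
qed

lemma opnorm_conj_rot_diff_le:
  assumes "cond_num Q \<le> \<kappa>"
  shows "opnorm (conj_rot Q a - conj_rot Q b) \<le> 2 * \<kappa> * \<bar>a - b\<bar>"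
proof -
  have "conj_rot Q a - conj_rot Q b = Q ** (rot a - rot b) ** matrix_inv Q"
    by (simp add: conj_rot_def mat_diff_left_distrib mat_diff_right_distrib matrix_mul_assoc)
  hence "opnorm (conj_rot Q a - conj_rot Q b) \<le> cond_num Q * opnorm (rot a - rot b)"
    using opnorm_mult3_le[of Q "rot a - rot b" "matrix_inv Q"] by (simp add: cond_num_def algebra_simps)
  also have "\<dots> \<le> \<kappa> * (2 * \<bar>a - b\<bar>)"
    using assms opnorm_rot_diff_le cond_num_nonneg[of Q] opnorm_nonneg by (intro mult_mono) auto
  finally show ?thesis by simp
qed

lemma opnorm_conj_rot_scaled_diff_le:
  assumes cond: "\<theta> \<noteq> 0 \<Longrightarrow> cond_num Q \<le> \<kappa>" and Q: "invertible Q"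
    and \<theta>: "0 \<le> \<theta>" "\<theta> \<le> \<Theta>" and \<kappa>: "0 \<le> \<kappa>"
  shows "opnorm (conj_rot Q (a * \<theta>) - conj_rot Q (b * \<theta>)) \<le> 2 * \<kappa> * \<Theta> * \<bar>a - b\<bar>"
proof (cases "\<theta> = 0")
  case False
  have "\<bar>a * \<theta> - b * \<theta>\<bar> = \<theta> * \<bar>a - b\<bar>"
    using \<theta>(1) by (simp add: abs_mult left_diff_distrib[symmetric])
  hence "opnorm (conj_rot Q (a * \<theta>) - conj_rot Q (b * \<theta>)) \<le> 2 * \<kappa> * (\<theta> * \<bar>a - b\<bar>)"
    using opnorm_conj_rot_diff_le[OF cond[OF False]] by metis
  also have "\<dots> \<le> 2 * \<kappa> * \<Theta> * \<bar>a - b\<bar>" using \<theta>(2) \<kappa> by (simp add: mult_left_mono mult_right_mono)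
  finally show ?thesis .
qed (use Q \<kappa> \<theta> in simp)

lemma tr2_mult_rot: "tr2 (N ** rot a) = (N$1$1 + N$2$2) * cos a - (N$2$1 - N$1$2) * sin a"
  by (subst M2_eta[of N]) (simp add: rot_def algebra_simps)

section \<open>Paths of perturbations along a periodic orbit\<close>

lemma C_path_diam_le_of_lipschitz:
  assumes inC: "\<And>t. t \<in> {0..1} \<Longrightarrow> in_C f X (\<gamma> t)"
    and lip: "\<And>s t. s \<in> {0..1} \<Longrightarrow> t \<in> {0..1} \<Longrightarrow> cdist f X (\<gamma> s) (\<gamma> t) \<le> L * \<bar>s - t\<bar>"
    and L: "0 \<le> L"
  shows "C_path f X \<gamma>" "C_diam f X \<gamma> \<le> L"
proof -
  show "C_path f X \<gamma>"
    unfolding C_path_def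
  proof (intro conjI ballI allI impI inC)
    fix t e :: real assume t: "t \<in> {0..1}" and e: "0 < e"
    show "\<exists>d>0. \<forall>s\<in>{0..1}. \<bar>s - t\<bar> < d \<longrightarrow> cdist f X (\<gamma> s) (\<gamma> t) < e"
    proof (intro exI conjI ballI impI)
      show "0 < e / (L + 1)" using e L by simp
      fix s :: real assume s: "s \<in> {0..1}" and "\<bar>s - t\<bar> < e / (L + 1)"
      hence "(L + 1) * \<bar>s - t\<bar> < e" using L by (simp add: field_simps)
      moreover have "cdist f X (\<gamma> s) (\<gamma> t) \<le> (L + 1) * \<bar>s - t\<bar>"
        using lip[OF s t] by (simp add: algebra_simps)
      ultimately show "cdist f X (\<gamma> s) (\<gamma> t) < e" by linarith
    qed
  qed
  show "C_diam f X \<gamma> \<le> L"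
    unfolding C_diam_def
  proof (rule cSup_least)
    show "{cdist f X (\<gamma> s) (\<gamma> t) |s t. s \<in> {0..1} \<and> t \<in> {0..1}} \<noteq> {}" by force
    fix z assume "z \<in> {cdist f X (\<gamma> s) (\<gamma> t) |s t. s \<in> {0..1} \<and> t \<in> {0..1}}"
    then obtain s t where st: "s \<in> {0..1}" "t \<in> {0..1}" and z: "z = cdist f X (\<gamma> s) (\<gamma> t)" by blast
    have "L * \<bar>s - t\<bar> \<le> L * 1" using st L by (intro mult_left_mono) auto
    thus "z \<le> L" using lip[OF st] z by simp
  qed
qed

locale periodic_point =
  fixes f :: "'a \<Rightarrow> 'a" and X :: 'a
  assumes periodic: "\<exists>q>0. (f^^q) X = X"
begin

abbreviation p :: nat where "p \<equiv> period f X"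

lemma period_pos: "0 < p" and funpow_period: "(f^^p) X = X"
  using LeastI_ex[OF periodic] unfolding period_def by auto

lemma period_minimal: "0 < q \<Longrightarrow> q < p \<Longrightarrow> (f^^q) X \<noteq> X"
  unfolding period_def using not_less_Least by blast

lemma funpow_mod_period: "(f^^k) X = (f^^(k mod p)) X"
proof -
  have "(f^^(q * p)) X = X" for q
    by (induction q) (simp_all add: funpow_add funpow_period)
  moreover have "(f^^k) X = (f^^(k mod p)) ((f^^((k div p) * p)) X)"
    by (metis funpow_add o_apply mod_div_decomp add.commute)
  ultimately show ?thesis by simp
qed

lemma funpow_complement: "j < p \<Longrightarrow> (f^^(p - j)) ((f^^j) X) = X"
  using funpow_period by (simp add: funpow_funpow)

lemma inj_on_funpow: "inj_on (\<lambda>k. (f^^k) X) {..<p}"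
proof -
  have "i = j" if ij: "i < p" "j < p" "i \<le> j" and eq: "(f^^i) X = (f^^j) X" for i j
  proof (rule ccontr)
    assume "i \<noteq> j"
    have "(f^^(j - i)) X = (f^^(j - i)) ((f^^(p - j)) ((f^^j) X))" using funpow_complement ij by simp
    also have "\<dots> = (f^^(p - j)) ((f^^(j - i)) ((f^^i) X))"
      unfolding eq by (simp add: funpow_funpow ac_simps)
    also have "\<dots> = X" using funpow_complement[of j] ij by (simp add: funpow_funpow)
    finally show False using period_minimal[of "j - i"] ij \<open>i \<noteq> j\<close> by simp
  qed
  thus ?thesis unfolding inj_on_def by (metis lessThan_iff nat_le_linear)
qed

lemma orbit_eq: "orbit f X = (\<lambda>k. (f^^k) X) ` {..<p}"
  unfolding orbit_def
proof (intro subset_antisym image_subsetI)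
  fix k show "(f^^k) X \<in> (\<lambda>k. (f^^k) X) ` {..<p}"
    using funpow_mod_period[of k] period_pos by (intro image_eqI[of _ _ "k mod p"]) auto
qed auto

lemma finite_orbit: "finite (orbit f X)" by (simp add: orbit_eq)

lemma orbit_nonempty: "orbit f X \<noteq> {}" by (simp add: orbit_def)

lemma funpow_period_funpow: "(f^^p) ((f^^k) X) = (f^^k) X"
  using funpow_period by (metis funpow_funpow add.commute)

lemma period_funpow: "period f ((f^^k) X) = p"
  unfolding period_def[of f "(f^^k) X"]
proof (rule Least_equality)
  show "0 < p \<and> (f^^p) ((f^^k) X) = (f^^k) X" using period_pos funpow_period_funpow by simp
  fix q assume q: "0 < q \<and> (f^^q) ((f^^k) X) = (f^^k) X"
  define j where "j = k mod p"
  have j: "j < p" "(f^^k) X = (f^^j) X" using funpow_mod_period period_pos by (simp_all add: j_def)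
  have "(f^^q) X = (f^^q) ((f^^(p - j)) ((f^^j) X))" using funpow_complement j by simp
  also have "\<dots> = (f^^(p - j)) ((f^^q) ((f^^j) X))" by (simp add: funpow_funpow ac_simps)
  also have "\<dots> = X" using q j funpow_complement by simp
  finally show "p \<le> q" using period_minimal q by (meson not_le)
qed

definition orbit_index :: "'a \<Rightarrow> nat" where "orbit_index x = (LEAST k. (f^^k) X = x)"

lemma orbit_index_funpow: "k < p \<Longrightarrow> orbit_index ((f^^k) X) = k"
  unfolding orbit_index_def
proof (rule Least_equality)
  fix j assume "k < p" "(f^^j) X = (f^^k) X"
  hence "(f^^(j mod p)) X = (f^^k) X" using funpow_mod_period by simp
  hence "j mod p = k" using inj_on_funpow \<open>k < p\<close> period_pos by (auto dest: inj_onD)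
  thus "k \<le> j" by (metis mod_less_eq_dividend)
qed simp

lemma orbit_index: "x \<in> orbit f X \<Longrightarrow> orbit_index x < p \<and> (f^^(orbit_index x)) X = x"
  using orbit_index_funpow orbit_eq by auto

lemma cdist_le:
  assumes "\<And>x. x \<in> orbit f X \<Longrightarrow> opnorm (\<sigma>1 x - \<sigma>2 x) \<le> c"
    and "\<And>x. x \<in> orbit f X \<Longrightarrow> opnorm (matrix_inv (\<sigma>1 x) - matrix_inv (\<sigma>2 x)) \<le> c"
  shows "cdist f X \<sigma>1 \<sigma>2 \<le> c"
  unfolding cdist_def using assms finite_orbit orbit_nonempty by simp

definition rot_perturb :: "('a \<Rightarrow> mat2) \<Rightarrow> (nat \<Rightarrow> mat2) \<Rightarrow> (nat \<Rightarrow> real) \<Rightarrow> real \<Rightarrow> 'a \<Rightarrow> mat2" where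
  "rot_perturb A Q \<theta> t x =
     (if x \<in> orbit f X then A x ** conj_rot (Q (orbit_index x)) (t * \<theta> (orbit_index x)) else A x)"

lemma return_map_rot_perturb:
  "return_map f (rot_perturb A Q \<theta> t) X = ordered_prod (\<lambda>k. A ((f^^k) X) ** conj_rot (Q k) (t * \<theta> k)) p"
  unfolding return_map_def cocycle_pow_ordered_prod
  by (rule ordered_prod_cong) (auto simp: rot_perturb_def orbit_index_funpow orbit_def)

lemma cdist_rot_perturb_le:
  assumes Ainv: "\<And>x. invertible (A x)"
    and Abound: "\<And>x. opnorm (A x) \<le> K0" "\<And>x. opnorm (matrix_inv (A x)) \<le> K0"
    and Q: "\<And>k. invertible (Q k)" and L: "0 \<le> L"
    and step: "\<And>k a b. opnorm (conj_rot (Q k) (a * \<theta> k) - conj_rot (Q k) (b * \<theta> k)) \<le> L * \<bar>a - b\<bar>"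
  shows "cdist f X (rot_perturb A Q \<theta> s) (rot_perturb A Q \<theta> t) \<le> K0 * L * \<bar>s - t\<bar>"
proof (rule cdist_le)
  let ?\<gamma> = "rot_perturb A Q \<theta>"
  have K0: "0 \<le> K0" using Abound(1) opnorm_nonneg order_trans by blast
  fix x assume x: "x \<in> orbit f X"
  define E where "E = (\<lambda>s. conj_rot (Q (orbit_index x)) (s * \<theta> (orbit_index x)))"
  have "opnorm (?\<gamma> s x - ?\<gamma> t x) = opnorm (A x ** (E s - E t))"
    using x by (simp add: rot_perturb_def E_def mat_diff_left_distrib)
  also have "\<dots> \<le> opnorm (A x) * opnorm (E s - E t)" by (rule opnorm_mult_le)
  also have "\<dots> \<le> K0 * (L * \<bar>s - t\<bar>)"
    using Abound(1) step opnorm_nonneg K0 unfolding E_def by (intro mult_mono) auto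
  finally show "opnorm (?\<gamma> s x - ?\<gamma> t x) \<le> K0 * L * \<bar>s - t\<bar>" by (simp add: mult.assoc)
  have "matrix_inv (?\<gamma> s x) - matrix_inv (?\<gamma> t x) = (matrix_inv (E s) - matrix_inv (E t)) ** matrix_inv (A x)"
    using x by (simp add: rot_perturb_def E_def mat_diff_right_distrib matrix_inv_mult Ainv Q invertible_conj_rot)
  also have "matrix_inv (E s) - matrix_inv (E t) = E (- s) - E (- t)"
    by (simp add: E_def matrix_inv_conj_rot Q)
  finally have "opnorm (matrix_inv (?\<gamma> s x) - matrix_inv (?\<gamma> t x))
      \<le> opnorm (E (- s) - E (- t)) * opnorm (matrix_inv (A x))"
    by (simp add: opnorm_mult_le)
  also have "\<dots> \<le> (L * \<bar>s - t\<bar>) * K0"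
    using Abound(2) step[of _ "- s" "- t"] opnorm_nonneg L unfolding E_def
    by (intro mult_mono) (auto simp: abs_minus_commute)
  finally show "opnorm (matrix_inv (?\<gamma> s x) - matrix_inv (?\<gamma> t x)) \<le> K0 * L * \<bar>s - t\<bar>"
    by (simp add: algebra_simps)
qed

lemma rot_perturb_path:
  assumes Ainv: "\<And>x. invertible (A x)"
    and Abound: "\<And>x. opnorm (A x) \<le> K0" "\<And>x. opnorm (matrix_inv (A x)) \<le> K0"
    and Q: "\<And>k. invertible (Q k)" and cond: "\<And>k. \<theta> k \<noteq> 0 \<Longrightarrow> cond_num (Q k) \<le> \<kappa>"
    and \<theta>: "\<And>k. 0 \<le> \<theta> k" "\<And>k. \<theta> k \<le> \<Theta>" and \<kappa>: "0 \<le> \<kappa>"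
    and small: "K0 * (2 * \<kappa> * \<Theta>) < \<epsilon>"
  shows "C_path f X (rot_perturb A Q \<theta>)" "\<forall>x\<in>orbit f X. rot_perturb A Q \<theta> 0 x = A x"
    "C_diam f X (rot_perturb A Q \<theta>) < \<epsilon>"
proof -
  let ?\<gamma> = "rot_perturb A Q \<theta>" and ?L = "2 * \<kappa> * \<Theta>"
  have K0: "0 \<le> K0" using Abound(1) opnorm_nonneg order_trans by blast
  have L: "0 \<le> ?L" using \<kappa> \<theta> order_trans by (metis mult_nonneg_nonneg zero_le_numeral)
  have cd: "cdist f X (?\<gamma> s) (?\<gamma> t) \<le> K0 * ?L * \<bar>s - t\<bar>" for s t
    using opnorm_conj_rot_scaled_diff_le[OF cond Q \<theta> \<kappa>] by (intro cdist_rot_perturb_le[OF Ainv Abound Q L])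
  have inC: "in_C f X (?\<gamma> t)" for t
    unfolding in_C_def rot_perturb_def using Ainv Q by (simp add: invertible_mult invertible_conj_rot)
  have "C_path f X ?\<gamma>" "C_diam f X ?\<gamma> \<le> K0 * ?L"
    by (rule C_path_diam_le_of_lipschitz[OF inC cd], use K0 L in simp)+
  thus "C_path f X ?\<gamma>" "C_diam f X ?\<gamma> < \<epsilon>" using small by auto
  show "\<forall>x\<in>orbit f X. ?\<gamma> 0 x = A x" by (simp add: rot_perturb_def Q)
qed

end

definition admissible_path ::
    "('a \<Rightarrow> 'a) \<Rightarrow> ('a \<Rightarrow> mat2) \<Rightarrow> real \<Rightarrow> 'a \<Rightarrow> (real \<Rightarrow> 'a \<Rightarrow> mat2) \<Rightarrow> bool" where
  "admissible_path f A \<epsilon> X \<gamma> \<longleftrightarrow> C_path f X \<gamma>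
           \<and> (\<forall>x\<in>orbit f X. \<gamma> 0 x = A x)
           \<and> C_diam f X \<gamma> < \<epsilon>
           \<and> (\<forall>s\<in>{0..1}. \<forall>t\<in>{0..1}. det (return_map f (\<gamma> s) X) = det (return_map f (\<gamma> t) X))
           \<and> (\<forall>s\<in>{0..1}. \<forall>t\<in>{0..1}. s < t \<longrightarrow>
                 lam_m (return_map f (\<gamma> s) X) \<le> lam_m (return_map f (\<gamma> t) X)
               \<and> lam_b (return_map f (\<gamma> s) X) \<ge> lam_b (return_map f (\<gamma> t) X))
           \<and> (\<exists>z w. z \<in> cx_eigenvalues (return_map f (\<gamma> 1) X) \<and> w \<in> cx_eigenvalues (return_map f (\<gamma> 1) X)
                 \<and> z \<noteq> w \<and> Im z \<noteq> 0 \<and> Im w \<noteq> 0)"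

text \<open>With the determinant fixed, the eigenvalue moduli are monotone in the trace, and a trace
  below \<open>2 sqrt D\<close> means non-real eigenvalues.\<close>

lemma admissible_pathI:
  assumes path: "C_path f X \<gamma>" "\<forall>x\<in>orbit f X. \<gamma> 0 x = A x" "C_diam f X \<gamma> < \<epsilon>"
    and D: "D > 0" and det: "\<And>t. t \<in> {0..1} \<Longrightarrow> det (return_map f (\<gamma> t) X) = D"
    and tr: "\<And>t. t \<in> {0..1} \<Longrightarrow> tr2 (return_map f (\<gamma> t) X) = T t"
    and anti: "\<And>s t. s \<in> {0..1} \<Longrightarrow> t \<in> {0..1} \<Longrightarrow> s \<le> t \<Longrightarrow> T t \<le> T s"
    and T1: "0 \<le> T 1" "T 1 < 2 * sqrt D"
  shows "admissible_path f A \<epsilon> X \<gamma>"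
proof -
  have Tnn: "0 \<le> T t" if "t \<in> {0..1}" for t using anti[OF that, of 1] that T1 by auto
  have lam: "lam_m (return_map f (\<gamma> t) X) = root_mod_min (T t) D"
            "lam_b (return_map f (\<gamma> t) X) = root_mod_max (T t) D" if "t \<in> {0..1}" for t
    using lam_m_lam_b_eq[of "return_map f (\<gamma> t) X"] det[OF that] tr[OF that] D Tnn[OF that] by auto
  have mono: "lam_m (return_map f (\<gamma> s) X) \<le> lam_m (return_map f (\<gamma> t) X)
             \<and> lam_b (return_map f (\<gamma> s) X) \<ge> lam_b (return_map f (\<gamma> t) X)"
    if st: "s \<in> {0..1}" "t \<in> {0..1}" "s < t" for s t
    unfolding lam[OF st(1)] lam[OF st(2)] using anti[OF st(1,2)] st(3) D Tnn[OF st(2)]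
    by (simp add: root_mod_min_antimono root_mod_max_mono)
  let ?R = "return_map f (\<gamma> 1) X"
  have "(T 1)^2 < (2 * sqrt D)^2" using T1 by (intro power_strict_mono) auto
  hence "tr2 ?R ^ 2 < 4 * det ?R" using D tr[of 1] det[of 1] by (simp add: power_mult_distrib)
  note nonreal = cx_eigenvalues_nonreal[OF this]
  have "\<exists>z w. z \<in> cx_eigenvalues ?R \<and> w \<in> cx_eigenvalues ?R \<and> z \<noteq> w \<and> Im z \<noteq> 0 \<and> Im w \<noteq> 0"
    using nonreal(1,2) by (intro exI[of _ "Complex (tr2 ?R / 2) (sqrt (4 * det ?R - tr2 ?R ^ 2) / 2)"]
          exI[of _ "Complex (tr2 ?R / 2) (- (sqrt (4 * det ?R - tr2 ?R ^ 2) / 2))"]) auto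
  thus ?thesis unfolding admissible_path_def using path det mono by auto
qed

lemma det_tr2_mult_conj:
  assumes "invertible (Q::mat2)"
  shows "det (M ** Q ** R ** matrix_inv Q) = det M * det R"
    and "tr2 (M ** Q ** R ** matrix_inv Q) = tr2 (matrix_inv Q ** M ** Q ** R)"
proof -
  have eq: "M ** Q ** R ** matrix_inv Q = Q ** (matrix_inv Q ** M ** Q ** R) ** matrix_inv Q"
    by (simp add: matrix_mul_assoc[symmetric] matrix_inv_cancel_right assms)
  show "tr2 (M ** Q ** R ** matrix_inv Q) = tr2 (matrix_inv Q ** M ** Q ** R)"
    unfolding eq tr2_conj[OF assms] ..
  show "det (M ** Q ** R ** matrix_inv Q) = det M * det R"
    unfolding eq det_conj[OF assms] using det_conj_inv[OF assms, of M] by (simp add: det_mul)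
qed

lemma mult_unit_interval_bounds:
  assumes "s \<in> {0..1}" "t \<in> {0..1}" "s \<le> t" "0 \<le> (\<phi>::real)"
  shows "0 \<le> s * \<phi>" "s * \<phi> \<le> t * \<phi>" "t * \<phi> \<le> \<phi>"
  using assms by (simp_all add: mult_right_mono mult_left_le_one_le)

lemma cos_sin_antimono:
  assumes "0 \<le> a" "0 \<le> b" "0 \<le> x" "x \<le> y" "y \<le> pi/2"
  shows "a * cos y - b * sin y \<le> a * cos x - b * sin x"
proof -
  have "cos y \<le> cos x" using assms by (intro cos_monotone_0_pi_le) auto
  moreover have "sin x \<le> sin y" using assms by (intro sin_monotone_2pi_le) auto
  ultimately show ?thesis using assms(1,2) by (smt (verit) mult_left_mono)
qed

text \<open>The angle is \<open>\<Phi>\<close> itself or the zero \<open>arctan (a / b)\<close> of the trace.\<close>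

lemma rotation_angle_exists:
  assumes a: "0 < a" and b: "0 \<le> b" and \<Phi>: "0 < \<Phi>" "\<Phi> \<le> pi/2" and D: "0 < D"
    and T\<Phi>: "a * cos \<Phi> - b * sin \<Phi> < 2 * sqrt D"
  obtains \<phi> where "0 \<le> \<phi>" "\<phi> \<le> \<Phi>" "0 \<le> a * cos \<phi> - b * sin \<phi>" "a * cos \<phi> - b * sin \<phi> < 2 * sqrt D"
proof (cases "0 \<le> a * cos \<Phi> - b * sin \<Phi>")
  case True
  thus ?thesis using that[of \<Phi>] \<Phi> T\<Phi> by simp
next
  case False
  have "0 < b"
  proof (rule ccontr)
    assume "\<not> 0 < b"
    moreover have "0 \<le> cos \<Phi>" using \<Phi> by (intro cos_ge_zero) auto
    ultimately show False using False a b by simp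
  qed
  define \<phi> where "\<phi> = arctan (a / b)"
  have \<phi>0: "0 \<le> \<phi>" using a \<open>0 < b\<close> by (simp add: \<phi>_def)
  have "0 < sqrt (1 + (a / b)^2)" by (simp add: add_pos_nonneg)
  hence T0: "a * cos \<phi> - b * sin \<phi> = 0"
    unfolding \<phi>_def cos_arctan sin_arctan using \<open>0 < b\<close> by (simp add: field_simps)
  have "\<phi> \<le> \<Phi>"
  proof (rule ccontr)
    assume "\<not> \<phi> \<le> \<Phi>"
    hence "a * cos \<phi> - b * sin \<phi> \<le> a * cos \<Phi> - b * sin \<Phi>"
      using \<Phi> a b arctan_ubound[of "a / b"] by (intro cos_sin_antimono) (auto simp: \<phi>_def)
    thus False using T0 False by simp
  qed
  thus ?thesis using that \<phi>0 T0 D by simp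
qed

context periodic_point
begin

lemma return_map_rot_perturb_telescope:
  assumes "\<And>x. invertible (A x)" "invertible Q"
  shows "return_map f (rot_perturb A (\<lambda>k. cocycle_pow A f k X ** Q) \<theta> t) X
         = return_map f A X ** Q ** rot (t * (\<Sum>k<p. \<theta> k)) ** matrix_inv Q"
  unfolding return_map_rot_perturb unfolding cocycle_pow_ordered_prod return_map_def
  using ordered_prod_conj_rot_telescope[of "\<lambda>k. A ((f^^k) X)" Q "\<lambda>k. t * \<theta> k" p] assms
  by (simp add: sum_distrib_left)

text \<open>Rotating by \<open>\<phi> / n\<close> after each of the first \<open>n\<close> steps, in the coordinates \<open>Q\<close> transported along
  the orbit, rotates the return map by \<open>\<phi>\<close>; the cost is controlled by the distortion of \<open>Q\<close> along
  these steps.\<close>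

lemma spread_rotation_admissible:
  fixes A :: "'a \<Rightarrow> mat2"
  defines "M \<equiv> return_map f A X"
  assumes Ainv: "\<And>x. invertible (A x)"
    and Abound: "\<And>x. opnorm (A x) \<le> K0" "\<And>x. opnorm (matrix_inv (A x)) \<le> K0"
    and n: "1 \<le> n" "n \<le> p" and Q: "invertible Q"
    and cond: "\<And>k. k < n \<Longrightarrow> cond_num (cocycle_pow A f k X ** Q) \<le> \<kappa>"
    and \<Phi>: "0 < \<Phi>" "\<Phi> \<le> pi/2" and small: "K0 * (2 * \<kappa> * (\<Phi> / real n)) < \<epsilon>"
    and trpos: "0 < tr2 M" and detpos: "0 < det M"
    and skew: "(matrix_inv Q ** M ** Q)$1$2 \<le> (matrix_inv Q ** M ** Q)$2$1"
    and trace_drop: "tr2 M * cos \<Phi> - ((matrix_inv Q ** M ** Q)$2$1 - (matrix_inv Q ** M ** Q)$1$2) * sin \<Phi>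
               < 2 * sqrt (det M)"
  shows "\<exists>\<gamma>. admissible_path f A \<epsilon> X \<gamma>"
proof -
  define N where "N = matrix_inv Q ** M ** Q"
  define b where "b = N$2$1 - N$1$2"
  obtain \<phi> where \<phi>: "0 \<le> \<phi>" "\<phi> \<le> \<Phi>" "0 \<le> tr2 M * cos \<phi> - b * sin \<phi>"
      "tr2 M * cos \<phi> - b * sin \<phi> < 2 * sqrt (det M)"
    by (rule rotation_angle_exists[OF trpos _ \<Phi> detpos]) (use skew trace_drop in \<open>simp_all add: b_def N_def\<close>)
  define \<theta> where "\<theta> = (\<lambda>k. if k < n then \<phi> / real n else 0)"
  define Qs where "Qs = (\<lambda>k. cocycle_pow A f k X ** Q)"
  let ?\<gamma> = "rot_perturb A Qs \<theta>"
  have Qs: "invertible (Qs k)" for k by (simp add: Qs_def invertible_mult Q cocycle_pow_invertible Ainv)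
  have \<kappa>: "0 \<le> \<kappa>" using cond[of 0] n cond_num_nonneg[of "cocycle_pow A f 0 X ** Q"] by simp
  have cond_Qs: "cond_num (Qs k) \<le> \<kappa>" if "\<theta> k \<noteq> 0" for k
    using that cond by (simp add: \<theta>_def Qs_def split: if_splits)
  have \<theta>: "0 \<le> \<theta> k" "\<theta> k \<le> \<Phi> / real n" for k
    using \<phi> n by (simp_all add: \<theta>_def divide_right_mono)
  note path = rot_perturb_path[where Q=Qs and \<theta>=\<theta>, OF Ainv Abound Qs cond_Qs \<theta> \<kappa> small]
  have "{..<p} \<inter> {k. k < n} = {..<n}" using n by auto
  hence "(\<Sum>k<p. \<theta> k) = \<phi>" using n by (simp add: \<theta>_def sum.If_cases)
  hence ret: "return_map f (?\<gamma> t) X = M ** Q ** rot (t * \<phi>) ** matrix_inv Q" for t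
    unfolding Qs_def M_def using return_map_rot_perturb_telescope[OF Ainv Q] by simp
  have trN: "N$1$1 + N$2$2 = tr2 M"
    using tr2_conj_inv[OF Q, of M] by (simp add: N_def tr2_def)
  show ?thesis
  proof (rule exI, rule admissible_pathI[OF path detpos])
    fix t :: real
    show "det (return_map f (?\<gamma> t) X) = det M"
      unfolding ret det_tr2_mult_conj[OF Q] by (simp add: det_rot)
    show "tr2 (return_map f (?\<gamma> t) X) = tr2 M * cos (t * \<phi>) - b * sin (t * \<phi>)"
      unfolding ret det_tr2_mult_conj[OF Q] tr2_mult_rot N_def[symmetric] trN b_def ..
  next
    fix s t :: real assume "s \<in> {0..1}" "t \<in> {0..1}" "s \<le> t"
    thus "tr2 M * cos (t * \<phi>) - b * sin (t * \<phi>) \<le> tr2 M * cos (s * \<phi>) - b * sin (s * \<phi>)"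
      using mult_unit_interval_bounds[of s t \<phi>] \<phi> \<Phi> trpos skew
      by (intro cos_sin_antimono) (auto simp: b_def N_def)
  qed (use \<phi> in simp_all)
qed

end

definition shear_rot :: "real \<Rightarrow> real \<Rightarrow> mat2" where
  "shear_rot \<sigma> \<phi> = M2 1 0 0 \<sigma> ** rot \<phi> ** M2 1 0 0 (1 / \<sigma>) ** rot \<phi>"

lemma matrix_inv_diag_shear: "\<sigma> \<noteq> 0 \<Longrightarrow> matrix_inv (M2 1 0 0 \<sigma>) = M2 1 0 0 (1 / \<sigma>)"
  using matrix_inv_M2[of 1 \<sigma> 0 0] by simp

lemma det_shear_rot: "\<sigma> \<noteq> 0 \<Longrightarrow> det (shear_rot \<sigma> \<phi>) = 1"
  by (simp add: shear_rot_def det_mul det_rot)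

lemma tr2_diag_shear_rot:
  assumes "0 < \<sigma>"
  shows "tr2 (M2 l1 0 0 l2 ** shear_rot \<sigma> \<phi>) = (l1 + l2) - (sin \<phi>)^2 * (l1 + l2 + l1 / \<sigma> + l2 * \<sigma>)"
proof -
  have "tr2 (M2 l1 0 0 l2 ** shear_rot \<sigma> \<phi>)
        = l1 * ((cos \<phi>)^2 - (sin \<phi>)^2 / \<sigma>) + l2 * ((cos \<phi>)^2 - \<sigma> * (sin \<phi>)^2)"
    using assms by (simp add: shear_rot_def rot_def power2_eq_square field_simps)
  thus ?thesis using assms unfolding cos_squared_eq by (simp add: field_simps)
qed

text \<open>The angle \<open>arctan (sqrt y)\<close>, \<open>y = (l1 + l2) / S\<close>, brings the trace of \<open>tr2_diag_shear_rot\<close> to zero.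
  It is small when the shear \<open>\<sigma>\<close> is large, because \<open>S \<ge> l2 * \<sigma>\<close>.\<close>

lemma shear_rotation_angle_exists:
  assumes l: "0 < l1" "l1 \<le> l2" and \<sigma>: "0 < \<sigma>"
  obtains \<phi> where "0 \<le> \<phi>" "\<phi> \<le> sqrt (2 / \<sigma>)" "\<phi> < pi / 2"
    "(sin \<phi>)^2 * (l1 + l2 + l1 / \<sigma> + l2 * \<sigma>) = l1 + l2"
proof -
  define S where "S = l1 / \<sigma> + l2 * \<sigma>"
  have S0: "0 < S" using l \<sigma> by (simp add: S_def add_pos_pos)
  define y where "y = (l1 + l2) / S"
  have y0: "0 \<le> y" using l S0 by (simp add: y_def)
  have "(l1 + l2) / S \<le> (2 * l2) / (l2 * \<sigma>)"
    using l \<sigma> S0 by (intro frac_le) (auto simp: S_def)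
  hence y2: "y \<le> 2 / \<sigma>" using l by (simp add: y_def)
  show ?thesis
  proof
    show "0 \<le> arctan (sqrt y)" using y0 by simp
    have "arctan (sqrt y) \<le> sqrt y" by (rule arctan_le_self) (simp add: y0)
    also have "\<dots> \<le> sqrt (2 / \<sigma>)" using y2 by simp
    finally show "arctan (sqrt y) \<le> sqrt (2 / \<sigma>)" .
    show "arctan (sqrt y) < pi/2" by (rule arctan_ubound)
    have sy: "(sin (arctan (sqrt y)))^2 = y / (1 + y)" using y0 by (simp add: sin_arctan power_divide)
    have "y * (l1 + l2 + S) = (l1 + l2) * (1 + y)" unfolding y_def using S0 by (simp add: field_simps)
    thus "(sin (arctan (sqrt y)))^2 * (l1 + l2 + l1 / \<sigma> + l2 * \<sigma>) = l1 + l2"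
      unfolding sy using y0 by (simp add: S_def field_simps)
  qed
qed

lemma conj_rot_shear:
  assumes C: "invertible C" and Q: "invertible Q" and \<sigma>: "\<sigma> \<noteq> 0"
  shows "conj_rot (C ** Q ** M2 1 0 0 \<sigma>) a ** C ** conj_rot Q a = C ** Q ** shear_rot \<sigma> a ** matrix_inv Q"
proof -
  let ?\<Delta> = "M2 1 0 0 \<sigma>" and ?R = "rot a"
  have \<Delta>: "invertible ?\<Delta>" using \<sigma> by (simp add: invertible_iff_det)
  have "conj_rot (C ** Q ** ?\<Delta>) a ** C ** conj_rot Q a
        = C ** (Q ** (?\<Delta> ** (?R ** (matrix_inv ?\<Delta> ** (matrix_inv Q ** (matrix_inv C ** (C ** (Q ** (?R ** matrix_inv Q)))))))))"
    unfolding conj_rot_def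
    using matrix_inv_mult[OF invertible_mult[OF C Q] \<Delta>] matrix_inv_mult[OF C Q]
    by (simp only: matrix_mul_assoc[symmetric])
  also have "\<dots> = C ** Q ** shear_rot \<sigma> a ** matrix_inv Q"
    by (simp only: matrix_inv_cancel_left[OF C] matrix_inv_cancel_left[OF Q])
      (simp add: shear_rot_def matrix_inv_diag_shear[OF \<sigma>] matrix_mul_assoc)
  finally show ?thesis .
qed

context periodic_point
begin

lemma return_map_shear_rotation:
  fixes A :: "'a \<Rightarrow> mat2"
  assumes Ainv: "\<And>x. invertible (A x)" and m: "0 < m" "m < p" and Q: "invertible Q" and \<sigma>: "\<sigma> \<noteq> 0"
  shows "return_map f (rot_perturb A (\<lambda>k. if k = m then cocycle_pow A f m X ** Q ** M2 1 0 0 \<sigma> else Q)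
                                      (\<lambda>k. if k = 0 \<or> k = m then \<phi> else 0) t) X
         = return_map f A X ** Q ** shear_rot \<sigma> (t * \<phi>) ** matrix_inv Q"
proof -
  define C where "C = cocycle_pow A f m X"
  have C: "invertible C" unfolding C_def by (rule cocycle_pow_invertible[OF Ainv])
  define B where "B = (\<lambda>k. A ((f^^k) X))"
  define E where "E = (\<lambda>k. conj_rot (if k = m then C ** Q ** M2 1 0 0 \<sigma> else Q) (t * (if k = 0 \<or> k = m then \<phi> else 0)))"
  have E1: "E k = mat 1" if "k \<noteq> 0" "k \<noteq> m" for k using that Q by (simp add: E_def)
  have pm: "m + (p - m) = p" using m by simp
  have tail: "ordered_prod (\<lambda>k. B (k + m)) (p - m) ** C = return_map f A X"
    using cocycle_pow_add[of A f m "p - m" X]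
    unfolding pm return_map_def C_def B_def cocycle_pow_ordered_prod
    by (simp add: funpow_funpow)
  have "return_map f (rot_perturb A (\<lambda>k. if k = m then C ** Q ** M2 1 0 0 \<sigma> else Q)
          (\<lambda>k. if k = 0 \<or> k = m then \<phi> else 0) t) X = ordered_prod (\<lambda>k. B k ** E k) (m + (p - m))"
    unfolding return_map_rot_perturb pm B_def E_def ..
  also have "\<dots> = ordered_prod (\<lambda>k. B (k + m)) (p - m) ** E m ** (C ** E 0)"
    unfolding ordered_prod_add
    using ordered_prod_insert_first[of "p - m" "\<lambda>k. E (k + m)" "\<lambda>k. B (k + m)"]
      ordered_prod_insert_first[of m E B] m E1
    by (simp add: C_def B_def cocycle_pow_ordered_prod)
  also have "\<dots> = ordered_prod (\<lambda>k. B (k + m)) (p - m) ** (E m ** C ** E 0)"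
    by (simp add: matrix_mul_assoc)
  also have "E m ** C ** E 0 = C ** Q ** shear_rot \<sigma> (t * \<phi>) ** matrix_inv Q"
    using conj_rot_shear[OF C Q \<sigma>] m by (simp add: E_def)
  finally show ?thesis using tail unfolding C_def by (simp add: matrix_mul_assoc)
qed

text \<open>If the expansion along the two eigendirections of the return map is very unbalanced after
  \<open>m\<close> steps, a shear \<open>\<sigma>\<close> at that time turns a small rotation at time \<open>0\<close> followed by the same
  rotation at time \<open>m\<close> into a large change of the trace.\<close>

lemma shear_rotation_admissible:
  fixes A :: "'a \<Rightarrow> mat2"
  defines "M \<equiv> return_map f A X"
  assumes Ainv: "\<And>x. invertible (A x)"
    and Abound: "\<And>x. opnorm (A x) \<le> K0" "\<And>x. opnorm (matrix_inv (A x)) \<le> K0"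
    and m: "0 < m" "m < p" and Q: "invertible Q"
    and diag: "matrix_inv Q ** M ** Q = M2 l1 0 0 l2" and l: "0 < l1" "l1 \<le> l2" and \<sigma>: "0 < \<sigma>"
    and cond: "cond_num Q \<le> \<kappa>" "cond_num (cocycle_pow A f m X ** Q ** M2 1 0 0 \<sigma>) \<le> \<kappa>"
    and small: "K0 * (2 * \<kappa> * sqrt (2 / \<sigma>)) < \<epsilon>"
  shows "\<exists>\<gamma>. admissible_path f A \<epsilon> X \<gamma>"
proof -
  obtain \<phi> where \<phi>: "0 \<le> \<phi>" "\<phi> \<le> sqrt (2 / \<sigma>)" "\<phi> < pi / 2"
      "(sin \<phi>)^2 * (l1 + l2 + l1 / \<sigma> + l2 * \<sigma>) = l1 + l2"
    using shear_rotation_angle_exists[OF l \<sigma>] by blast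
  define Qs where "Qs = (\<lambda>k. if k = m then cocycle_pow A f m X ** Q ** M2 1 0 0 \<sigma> else Q)"
  define \<theta> where "\<theta> = (\<lambda>k. if k = 0 \<or> k = m then \<phi> else 0)"
  let ?\<gamma> = "rot_perturb A Qs \<theta>" and ?S = "l1 + l2 + l1 / \<sigma> + l2 * \<sigma>"
  have "invertible (cocycle_pow A f m X)" by (rule cocycle_pow_invertible[OF Ainv])
  hence Qs: "invertible (Qs k)" for k using Q \<sigma> by (simp add: Qs_def invertible_iff_det det_mul)
  have cond_Qs: "cond_num (Qs k) \<le> \<kappa>" for k using cond by (simp add: Qs_def)
  have \<theta>: "0 \<le> \<theta> k" "\<theta> k \<le> sqrt (2 / \<sigma>)" for k using \<phi> \<sigma> by (simp_all add: \<theta>_def)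
  have \<kappa>: "0 \<le> \<kappa>" using cond(1) cond_num_nonneg[of Q] by simp
  note path = rot_perturb_path[where Q=Qs and \<theta>=\<theta>, OF Ainv Abound Qs cond_Qs \<theta> \<kappa> small]
  have ret: "return_map f (?\<gamma> t) X = M ** Q ** shear_rot \<sigma> (t * \<phi>) ** matrix_inv Q" for t
    unfolding Qs_def \<theta>_def M_def using return_map_shear_rotation[OF Ainv m Q] \<sigma> by simp
  have "det M = l1 * l2" using det_conj_inv[OF Q, of M] diag by simp
  show ?thesis
  proof (rule exI, rule admissible_pathI[OF path])
    show "0 < l1 * l2" using l by simp
    fix t :: real
    show "det (return_map f (?\<gamma> t) X) = l1 * l2"
      unfolding ret det_tr2_mult_conj[OF Q] using \<sigma> \<open>det M = l1 * l2\<close> by (simp add: det_shear_rot)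
    show "tr2 (return_map f (?\<gamma> t) X) = (l1 + l2) - (sin (t * \<phi>))^2 * ?S"
      unfolding ret det_tr2_mult_conj[OF Q] diag tr2_diag_shear_rot[OF \<sigma>] ..
  next
    fix s t :: real assume "s \<in> {0..1}" "t \<in> {0..1}" "s \<le> t"
    note st = mult_unit_interval_bounds[OF this \<phi>(1)]
    have "0 \<le> sin (s * \<phi>)" using st \<phi>(3) by (intro sin_ge_zero) auto
    moreover have "sin (s * \<phi>) \<le> sin (t * \<phi>)" using st \<phi>(3) pi_gt_zero by (intro sin_monotone_2pi_le) auto
    ultimately have "(sin (s * \<phi>))^2 \<le> (sin (t * \<phi>))^2" by (simp add: power_mono)
    moreover have "0 \<le> ?S" using l \<sigma> by simp
    ultimately show "(l1 + l2) - (sin (t * \<phi>))^2 * ?S \<le> (l1 + l2) - (sin (s * \<phi>))^2 * ?S"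
      by (simp add: mult_right_mono)
  qed (use \<phi>(4) l in simp_all)
qed

end

section \<open>Eigenframes\<close>

definition cols :: "real^2 \<Rightarrow> real^2 \<Rightarrow> mat2" where
  "cols u w = M2 (u$1) (w$1) (u$2) (w$2)"

lemma det_cols: "det (cols u w) = u$1 * w$2 - w$1 * u$2"
  by (simp add: cols_def)

lemma det_cols_scaleR: "det (cols (a *\<^sub>R u) (b *\<^sub>R w)) = a * b * det (cols u w)"
  by (simp add: det_cols algebra_simps)

lemma det_cols_swap: "det (cols w u) = - det (cols u w)"
  by (simp add: det_cols)

lemma cols_nonzero: "det (cols u w) \<noteq> 0 \<Longrightarrow> u \<noteq> 0 \<and> w \<noteq> 0"
  by (auto simp: det_cols)

lemma mult_cols: "M ** cols u w = cols (M *v u) (M *v w)"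
proof -
  obtain a b c d where M: "M = M2 a b c d" using M2_eta by blast
  obtain u1 u2 where U: "u = V2 u1 u2" using V2_eta by blast
  obtain w1 w2 where W: "w = V2 w1 w2" using V2_eta by blast
  show ?thesis unfolding M U W by (simp add: cols_def)
qed

lemma cols_mult_diag: "cols u w ** M2 1 0 0 s = cols u (s *\<^sub>R w)"
  by (simp add: cols_def mult.commute)

lemma frobenius_cols:
  "(cols u w)$1$1^2 + (cols u w)$1$2^2 + (cols u w)$2$1^2 + (cols u w)$2$2^2 = (norm u)^2 + (norm w)^2"
proof -
  obtain u1 u2 where U: "u = V2 u1 u2" using V2_eta by blast
  obtain w1 w2 where W: "w = V2 w1 w2" using V2_eta by blast
  show ?thesis unfolding U W by (simp add: cols_def norm_V2)
qed

lemma inner_sq_plus_det_sq: "(u \<bullet> w)^2 + (det (cols u w))^2 = (norm u)^2 * (norm w)^2"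
proof -
  obtain u1 u2 where U: "u = V2 u1 u2" using V2_eta by blast
  obtain w1 w2 where W: "w = V2 w1 w2" using V2_eta by blast
  show ?thesis unfolding U W by (simp add: cols_def norm_V2 inner_V2 power2_eq_square algebra_simps)
qed

lemma cond_num_cols_le:
  assumes "norm u = 1" "norm w = 1" "det (cols u w) \<noteq> 0" "a \<noteq> 0" "b \<noteq> 0"
  shows "cond_num (cols (a *\<^sub>R u) (b *\<^sub>R w)) \<le> (a^2 + b^2) / (\<bar>a\<bar> * \<bar>b\<bar> * \<bar>det (cols u w)\<bar>)"
proof -
  have "det (cols (a *\<^sub>R u) (b *\<^sub>R w)) \<noteq> 0" unfolding det_cols_scaleR using assms by simp
  note bound = cond_num_le_frobenius[OF this]
  have "(cols (a *\<^sub>R u) (b *\<^sub>R w))$1$1^2 + (cols (a *\<^sub>R u) (b *\<^sub>R w))$1$2^2 +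
        (cols (a *\<^sub>R u) (b *\<^sub>R w))$2$1^2 + (cols (a *\<^sub>R u) (b *\<^sub>R w))$2$2^2 = a^2 + b^2"
    unfolding frobenius_cols using assms by (simp add: power_mult_distrib)
  thus ?thesis using bound unfolding det_cols_scaleR by (simp add: abs_mult)
qed

lemma cols_diagonalizes:
  assumes u: "M *v u = l1 *\<^sub>R u" and w: "M *v w = l2 *\<^sub>R w" and D: "det (cols u w) \<noteq> 0"
  shows "matrix_inv (cols u w) ** M ** cols u w = M2 l1 0 0 l2"
proof -
  have inv: "invertible (cols u w)" using D by (simp add: invertible_iff_det)
  have "M ** cols u w = cols u w ** M2 l1 0 0 l2"
  proof -
    obtain u1 u2 where U: "u = V2 u1 u2" using V2_eta by blast
    obtain w1 w2 where W: "w = V2 w1 w2" using V2_eta by blast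
    show ?thesis unfolding mult_cols u w unfolding U W by (simp add: cols_def algebra_simps)
  qed
  thus ?thesis by (simp add: matrix_mul_assoc[symmetric] matrix_inv_cancel_left[OF inv])
qed

text \<open>The skew part \<open>M$2$1 - M$1$2\<close> measures how far the eigenvectors are from orthogonal.\<close>

lemma skew_eigenvectors:
  assumes u: "M *v u = l1 *\<^sub>R u" and w: "M *v w = l2 *\<^sub>R w"
  shows "(M$2$1 - M$1$2) * det (cols u w) = (l1 - l2) * (u \<bullet> w)"
proof -
  obtain a b c d where M: "M = M2 a b c d" using M2_eta by blast
  obtain u1 u2 where U: "u = V2 u1 u2" using V2_eta by blast
  obtain w1 w2 where W: "w = V2 w1 w2" using V2_eta by blast
  have "a*u1 + b*u2 = l1*u1" "c*u1 + d*u2 = l1*u2" "a*w1 + b*w2 = l2*w1" "c*w1 + d*w2 = l2*w2"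
    using u w unfolding M U W by (simp_all add: V2_eq_iff)
  hence "(c - b) * (u1*w2 - w1*u2) = (l1 - l2) * (u1*w1 + u2*w2)" by algebra
  thus ?thesis unfolding M U W by (simp add: cols_def inner_V2)
qed

lemma det_unit_eigenvectors_ge:
  assumes u: "M *v u = l1 *\<^sub>R u" "norm u = 1" and w: "M *v w = l2 *\<^sub>R w" "norm w = 1"
    and l: "l1 < l2" and s: "0 < s" "s \<le> 1" and skew: "\<bar>M$2$1 - M$1$2\<bar> * s \<le> l2 - l1"
  shows "s / sqrt 2 \<le> \<bar>det (cols u w)\<bar>"
proof -
  let ?D = "det (cols u w)" and ?ip = "u \<bullet> w"
  have "\<bar>M$2$1 - M$1$2\<bar> * \<bar>?D\<bar> = (l2 - l1) * \<bar>?ip\<bar>"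
    using arg_cong[OF skew_eigenvectors[OF u(1) w(1)], of abs] l by (simp add: abs_mult)
  hence "(l2 - l1) * (\<bar>?ip\<bar> * s) = (\<bar>M$2$1 - M$1$2\<bar> * s) * \<bar>?D\<bar>" by (simp add: ac_simps)
  also have "\<dots> \<le> (l2 - l1) * \<bar>?D\<bar>" using skew by (intro mult_right_mono) auto
  finally have "\<bar>?ip\<bar> * s \<le> \<bar>?D\<bar>" using l by simp
  hence "?ip^2 * s^2 \<le> ?D^2" using s power_mono[of "\<bar>?ip\<bar> * s" "\<bar>?D\<bar>" 2] by (simp add: power_mult_distrib)
  moreover have "?ip^2 = 1 - ?D^2" using inner_sq_plus_det_sq[of u w] u(2) w(2) by simp
  ultimately have "s^2 \<le> ?D^2 * (1 + s^2)" by (simp add: algebra_simps)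
  also have "\<dots> \<le> ?D^2 * 2" using s power_le_one[of s 2] by (intro mult_left_mono) auto
  finally have "sqrt (s^2 / 2) \<le> sqrt (?D^2)" by (intro real_sqrt_le_mono) simp
  thus ?thesis using s by (simp add: real_sqrt_divide)
qed

lemma cols_coordinates:
  assumes "det (cols u w) \<noteq> 0"
  shows "\<exists>\<alpha> \<beta>. v = \<alpha> *\<^sub>R u + \<beta> *\<^sub>R w"
proof -
  have inv: "invertible (cols u w)" using assms by (simp add: invertible_iff_det)
  define z where "z = matrix_inv (cols u w) *v v"
  have "v = cols u w *v z" unfolding z_def by (simp add: matrix_inv_vector_cancel[OF inv])
  also have "\<dots> = (z$1) *\<^sub>R u + (z$2) *\<^sub>R w"
  proof -
    obtain u1 u2 where U: "u = V2 u1 u2" using V2_eta by blast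
    obtain w1 w2 where W: "w = V2 w1 w2" using V2_eta by blast
    obtain z1 z2 where Z: "z = V2 z1 z2" using V2_eta by blast
    show ?thesis unfolding U W Z by (simp add: cols_def algebra_simps)
  qed
  finally show ?thesis by blast
qed

lemma eigenvector_collinear:
  assumes u: "M *v u = l1 *\<^sub>R u" and w: "M *v w = l2 *\<^sub>R w" and D: "det (cols u w) \<noteq> 0"
    and l: "l1 \<noteq> l2" and v: "M *v v = l1 *\<^sub>R v"
  shows "\<exists>c. v = c *\<^sub>R u"
proof -
  obtain \<alpha> \<beta> where vv: "v = \<alpha> *\<^sub>R u + \<beta> *\<^sub>R w" using cols_coordinates[OF D] by blast
  have "M *v v = \<alpha> *\<^sub>R (l1 *\<^sub>R u) + \<beta> *\<^sub>R (l2 *\<^sub>R w)"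
    unfolding vv matrix_vector_right_distrib matrix_vector_mult_scaleR u w ..
  hence "(\<beta> * (l2 - l1)) *\<^sub>R w = 0" using v vv by (simp add: algebra_simps)
  hence "\<beta> = 0" using l cols_nonzero[OF D] by simp
  thus ?thesis using vv by auto
qed

lemma eigenvectors_of_diagonal_form:
  assumes M: "M = P ** M2 d1 0 0 d2 ** matrix_inv P" and P: "invertible P"
  shows "M *v (V2 (P$1$1) (P$2$1)) = d1 *\<^sub>R V2 (P$1$1) (P$2$1)"
    "M *v (V2 (P$1$2) (P$2$2)) = d2 *\<^sub>R V2 (P$1$2) (P$2$2)"
    "det (cols (V2 (P$1$1) (P$2$1)) (V2 (P$1$2) (P$2$2))) = det P"
    "tr2 M = d1 + d2" "det M = d1 * d2"
proof -
  have MP: "M ** P = P ** M2 d1 0 0 d2"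
    using M by (simp add: matrix_mul_assoc[symmetric] matrix_inv_left[OF P])
  have cP: "P = cols (V2 (P$1$1) (P$2$1)) (V2 (P$1$2) (P$2$2))"
    by (subst M2_eta[of P]) (simp add: cols_def)
  have "cols (M *v V2 (P$1$1) (P$2$1)) (M *v V2 (P$1$2) (P$2$2)) =
        cols (d1 *\<^sub>R V2 (P$1$1) (P$2$1)) (d2 *\<^sub>R V2 (P$1$2) (P$2$2))"
    using MP unfolding mult_cols[symmetric] cP[symmetric]
    by (subst (asm) M2_eta[of P]) (simp add: cols_def algebra_simps)
  thus "M *v (V2 (P$1$1) (P$2$1)) = d1 *\<^sub>R V2 (P$1$1) (P$2$1)"
    "M *v (V2 (P$1$2) (P$2$2)) = d2 *\<^sub>R V2 (P$1$2) (P$2$2)"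
    unfolding cols_def by (simp_all add: M2_eq_iff vec_eq_iff forall_2)
  show "det (cols (V2 (P$1$1) (P$2$1)) (V2 (P$1$2) (P$2$2))) = det P"
    by (subst (2) M2_eta[of P]) (simp add: cols_def)
  show "tr2 M = d1 + d2" "det M = d1 * d2"
    using tr2_conj[OF P] det_conj[OF P] M by simp_all
qed

lemma unit_eigenvector:
  assumes "(M::mat2) *v u = l *\<^sub>R u" "u \<noteq> 0"
  shows "\<exists>v. norm v = 1 \<and> M *v v = l *\<^sub>R v"
proof (intro exI conjI)
  show "norm ((1 / norm u) *\<^sub>R u) = 1" using assms(2) by simp
  show "M *v ((1 / norm u) *\<^sub>R u) = l *\<^sub>R ((1 / norm u) *\<^sub>R u)"
    unfolding matrix_vector_mult_scaleR assms(1) by simp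
qed

lemma restr_norm_line:
  assumes "\<And>v. v \<in> S \<Longrightarrow> \<exists>c. v = c *\<^sub>R u" and "u \<in> S" and "norm u = 1"
  shows "restr_norm (B::mat2) S = norm (B *v u)"
proof -
  have "(\<lambda>v. norm (B *v v)) ` {v \<in> S. norm v = 1} = {norm (B *v u)}"
  proof
    show "(\<lambda>v. norm (B *v v)) ` {v \<in> S. norm v = 1} \<subseteq> {norm (B *v u)}"
    proof clarify
      fix v assume v: "v \<in> S" "norm v = 1"
      obtain c where c: "v = c *\<^sub>R u" using assms(1)[OF v(1)] by blast
      have "\<bar>c\<bar> = 1" using v(2) assms(3) unfolding c by simp
      thus "norm (B *v v) = norm (B *v u)" unfolding c matrix_vector_mult_scaleR by simp
    qed
    show "{norm (B *v u)} \<subseteq> (\<lambda>v. norm (B *v v)) ` {v \<in> S. norm v = 1}" using assms(2,3) by auto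
  qed
  thus ?thesis unfolding restr_norm_def by simp
qed

section \<open>Without admissible paths the eigendirections dominate\<close>

lemma diagonal_matrix_M2: "((\<chi> i j. if i = j then d i else (0::real)) :: mat2) = M2 (d 1) 0 0 (d 2)"
  by (simp add: vec_eq_iff forall_2 M2_def)

locale no_admissible_path =
  fixes f :: "'a \<Rightarrow> 'a" and A :: "'a \<Rightarrow> mat2" and K0 \<epsilon> :: real
  assumes periodic: "periodic_map f" and Ainv: "\<And>x. invertible (A x)"
    and Abound: "\<And>x. opnorm (A x) \<le> K0" "\<And>x. opnorm (matrix_inv (A x)) \<le> K0"
    and K0: "0 < K0" and \<epsilon>: "0 < \<epsilon>" and diagonalizable: "diagonalizable_pos f A"
    and no_admissible: "\<And>X \<gamma>. \<not> admissible_path f A \<epsilon> X \<gamma>"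
begin

abbreviation Apow :: "nat \<Rightarrow> 'a \<Rightarrow> mat2" where "Apow k y \<equiv> cocycle_pow A f k y"

abbreviation Ret :: "'a \<Rightarrow> mat2" where "Ret y \<equiv> return_map f A y"

lemma periodic_point: "periodic_point f y"
  using periodic unfolding periodic_map_def by unfold_locales blast

lemma period_pos: "0 < period f y"
  using periodic_point.period_pos[OF periodic_point] .

lemma funpow_period: "(f^^(period f y)) y = y"
  using periodic_point.funpow_period[OF periodic_point] .

lemma period_funpow: "period f ((f^^k) y) = period f y"
  using periodic_point.period_funpow[OF periodic_point] .

lemma Apow_invertible: "invertible (Apow k y)"
  by (rule cocycle_pow_invertible[OF Ainv])

lemma Apow_add: "Apow (a + b) y = Apow b ((f^^a) y) ** Apow a y"
  by (rule cocycle_pow_add)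

lemma Ret_funpow_mult: "Ret ((f^^k) y) ** Apow k y = Apow k y ** Ret y"
proof -
  have "Ret ((f^^k) y) ** Apow k y = Apow (k + period f y) y"
    unfolding return_map_def period_funpow using cocycle_pow_add[of A f k "period f y" y] by simp
  also have "\<dots> = Apow (period f y + k) y" by (simp add: add.commute)
  also have "\<dots> = Apow k y ** Ret y" unfolding cocycle_pow_add return_map_def funpow_period ..
  finally show ?thesis .
qed

lemma Ret_funpow_eq: "Ret ((f^^k) y) = Apow k y ** Ret y ** matrix_inv (Apow k y)"
  using Ret_funpow_mult[of k y]
  by (metis matrix_inv_cancel_right Apow_invertible matrix_mul_assoc matrix_mul_rid matrix_inv_right)

lemma tr_det_Ret_funpow: "tr2 (Ret ((f^^k) y)) = tr2 (Ret y)" "det (Ret ((f^^k) y)) = det (Ret y)"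
  unfolding Ret_funpow_eq using tr2_conj det_conj Apow_invertible by simp_all

definition eig_lo :: "'a \<Rightarrow> real" where "eig_lo y = root_mod_min (tr2 (Ret y)) (det (Ret y))"
definition eig_hi :: "'a \<Rightarrow> real" where "eig_hi y = root_mod_max (tr2 (Ret y)) (det (Ret y))"

lemma eig_lo_hi_funpow: "eig_lo ((f^^k) y) = eig_lo y" "eig_hi ((f^^k) y) = eig_hi y"
  unfolding eig_lo_def eig_hi_def tr_det_Ret_funpow by simp_all

lemma eigenbasis:
  "\<exists>u w. Ret y *v u = eig_lo y *\<^sub>R u \<and> Ret y *v w = eig_hi y *\<^sub>R w \<and> det (cols u w) \<noteq> 0
     \<and> 0 < eig_lo y \<and> eig_lo y \<le> eig_hi y \<and> tr2 (Ret y) = eig_lo y + eig_hi y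
     \<and> det (Ret y) = eig_lo y * eig_hi y \<and> (eig_lo y = eig_hi y \<longrightarrow> Ret y = M2 (eig_lo y) 0 0 (eig_lo y))"
proof -
  obtain P and d :: "2 \<Rightarrow> real" where P: "invertible P" "\<forall>i. 0 < d i"
    "Ret y = P ** M2 (d 1) 0 0 (d 2) ** matrix_inv P"
    using diagonalizable unfolding diagonalizable_pos_def diagonal_matrix_M2 by blast
  define d1 d2 where "d1 = d 1" and "d2 = d 2"
  have d: "0 < d1" "0 < d2" using P(2) by (simp_all add: d1_def d2_def)
  note E = eigenvectors_of_diagonal_form[OF P(3)[folded d1_def d2_def] P(1)]
  have dP: "det P \<noteq> 0" using P(1) by (simp add: invertible_iff_det)
  have lh: "eig_lo y = min d1 d2" "eig_hi y = max d1 d2"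
    unfolding eig_lo_def eig_hi_def E(4,5) using root_mod_sum_prod[OF d] by auto
  have scal: "Ret y = M2 (eig_lo y) 0 0 (eig_lo y)" if "eig_lo y = eig_hi y"
  proof -
    have "d1 = d2" "eig_lo y = d1" using lh that by (auto simp: min_def max_def split: if_splits)
    obtain a b c d' where "P = M2 a b c d'" using M2_eta by blast
    hence "P ** M2 d1 0 0 d1 = M2 d1 0 0 d1 ** P" by (simp add: algebra_simps)
    hence "Ret y = M2 d1 0 0 d1 ** (P ** matrix_inv P)"
      using P(3) \<open>d1 = d2\<close> by (simp add: matrix_mul_assoc d1_def d2_def)
    thus ?thesis using matrix_inv_right[OF P(1)] \<open>eig_lo y = d1\<close> by (simp add: mat1_M2)
  qed
  let ?u = "V2 (P$1$1) (P$2$1)" and ?w = "V2 (P$1$2) (P$2$2)"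
  show ?thesis
  proof (cases "d1 \<le> d2")
    case True
    thus ?thesis using E dP lh d scal by (intro exI[of _ ?u] exI[of _ ?w]) auto
  next
    case False
    thus ?thesis using E dP lh d scal det_cols_swap[of ?w ?u] by (intro exI[of _ ?w] exI[of _ ?u]) auto
  qed
qed

lemma eig_lo_pos: "0 < eig_lo y" using eigenbasis by blast
lemma eig_lo_le_hi: "eig_lo y \<le> eig_hi y" using eigenbasis by blast
lemma tr2_Ret: "tr2 (Ret y) = eig_lo y + eig_hi y" using eigenbasis by blast
lemma det_Ret: "det (Ret y) = eig_lo y * eig_hi y" using eigenbasis by blast

text \<open>A rotation by \<open>\<theta>0\<close> after a single step is admissible in size.\<close>

definition \<theta>0 :: real where "\<theta>0 = min (pi/2) (\<epsilon> / (8 * K0))"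

lemma \<theta>0: "0 < \<theta>0" "\<theta>0 \<le> pi/2" "K0 * (4 * \<theta>0) < \<epsilon>"
proof -
  show "0 < \<theta>0" using \<epsilon> K0 by (simp add: \<theta>0_def)
  show "\<theta>0 \<le> pi/2" by (simp add: \<theta>0_def)
  have "\<theta>0 \<le> \<epsilon> / (8 * K0)" by (simp add: \<theta>0_def)
  hence "K0 * (4 * \<theta>0) \<le> K0 * (4 * (\<epsilon> / (8 * K0)))" using K0 by (intro mult_left_mono) auto
  also have "\<dots> = \<epsilon> / 2" using K0 by (simp add: field_simps)
  finally show "K0 * (4 * \<theta>0) < \<epsilon>" using \<epsilon> by simp
qed

text \<open>Otherwise a rotation by \<open>\<theta>0\<close> after the first step of the orbit of \<open>y\<close>, in the standard
  coordinates or their mirror image, would be admissible.\<close>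

lemma return_trace_gap:
  "2 * sqrt (det (Ret y)) \<le> tr2 (Ret y) * cos \<theta>0 - \<bar>Ret y $2$1 - Ret y $1$2\<bar> * sin \<theta>0"
proof (rule ccontr)
  assume gap: "\<not> ?thesis"
  interpret P: periodic_point f y by (rule periodic_point)
  obtain a b c d where M: "Ret y = M2 a b c d" using M2_eta by blast
  define s :: real where "s = (if b \<le> c then 1 else -1)"
  define Q where "Q = M2 1 0 0 s"
  have s: "s * s = 1" "\<bar>s\<bar> = 1" "s * (c - b) = \<bar>c - b\<bar>" "s * b \<le> s * c" by (simp_all add: s_def)
  have Q: "invertible Q" "matrix_inv Q = Q"
    using s matrix_inv_M2[of 1 s 0 0] by (simp_all add: Q_def invertible_iff_det s_def)
  have N: "matrix_inv Q ** M2 a b c d ** Q = M2 a (s * b) (s * c) d"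
    using s(1) unfolding Q(2) unfolding Q_def by (simp add: algebra_simps)
  have "cond_num Q \<le> (1 + s^2) / \<bar>s\<bar>"
    using cond_num_le_frobenius[of Q] s by (simp add: Q_def)
  hence cond: "cond_num (cocycle_pow A f k y ** Q) \<le> 2" if "k < 1" for k
    using that s by (simp add: power2_eq_square)
  have "0 < tr2 (Ret y)" "0 < det (Ret y)"
    using eig_lo_pos[of y] eig_lo_le_hi[of y] by (simp_all add: tr2_Ret det_Ret mult_pos_pos)
  hence "\<exists>\<gamma>. admissible_path f A \<epsilon> y \<gamma>"
    using P.spread_rotation_admissible[where n=1 and \<kappa>=2 and \<Phi>=\<theta>0 and Q=Q, OF Ainv Abound _ _ Q(1) cond \<theta>0(1,2)]
      \<theta>0(3) period_pos[of y] gap s(3,4) by (simp add: M N right_diff_distrib[symmetric])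
  thus False using no_admissible by blast
qed

lemma cos_sin_\<theta>0: "cos \<theta>0 < 1" "0 \<le> cos \<theta>0" "0 < sin \<theta>0"
proof -
  have "cos \<theta>0 < cos 0" using \<theta>0 by (intro cos_monotone_0_pi) auto
  thus "cos \<theta>0 < 1" by simp
  show "0 \<le> cos \<theta>0" using \<theta>0 by (intro cos_ge_zero) auto
  show "0 < sin \<theta>0" using \<theta>0 by (intro sin_gt_zero) auto
qed

lemma eig_lo_lt_hi: "eig_lo y < eig_hi y"
proof (rule ccontr)
  assume "\<not> eig_lo y < eig_hi y"
  hence e: "eig_lo y = eig_hi y" using eig_lo_le_hi[of y] by simp
  hence M: "Ret y = M2 (eig_lo y) 0 0 (eig_lo y)" using eigenbasis[of y] by blast
  have l: "0 < eig_lo y" by (rule eig_lo_pos)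
  have "2 * sqrt (det (Ret y)) \<le> tr2 (Ret y) * cos \<theta>0 - \<bar>Ret y $2$1 - Ret y $1$2\<bar> * sin \<theta>0"
    by (rule return_trace_gap)
  hence "2 * eig_lo y \<le> 2 * eig_lo y * cos \<theta>0" using l unfolding M by (simp add: power2_eq_square[symmetric])
  hence "1 \<le> cos \<theta>0" using l by simp
  thus False using cos_sin_\<theta>0 by simp
qed

definition ev_lo :: "'a \<Rightarrow> real^2" where "ev_lo y = (SOME u. norm u = 1 \<and> Ret y *v u = eig_lo y *\<^sub>R u)"
definition ev_hi :: "'a \<Rightarrow> real^2" where "ev_hi y = (SOME u. norm u = 1 \<and> Ret y *v u = eig_hi y *\<^sub>R u)"

lemma ev_lo_hi: "norm (ev_lo y) = 1" "Ret y *v ev_lo y = eig_lo y *\<^sub>R ev_lo y"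
   "norm (ev_hi y) = 1" "Ret y *v ev_hi y = eig_hi y *\<^sub>R ev_hi y" "det (cols (ev_lo y) (ev_hi y)) \<noteq> 0"
proof -
  obtain u w where uw: "Ret y *v u = eig_lo y *\<^sub>R u" "Ret y *v w = eig_hi y *\<^sub>R w" "det (cols u w) \<noteq> 0"
    using eigenbasis[of y] by blast
  have u0: "u \<noteq> 0" and w0: "w \<noteq> 0" using uw(3) by (auto simp: det_cols)
  have "\<exists>v. norm v = 1 \<and> Ret y *v v = eig_lo y *\<^sub>R v" by (rule unit_eigenvector[OF uw(1) u0])
  hence F: "norm (ev_lo y) = 1 \<and> Ret y *v ev_lo y = eig_lo y *\<^sub>R ev_lo y" unfolding ev_lo_def by (rule someI_ex)
  have "\<exists>v. norm v = 1 \<and> Ret y *v v = eig_hi y *\<^sub>R v" by (rule unit_eigenvector[OF uw(2) w0])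
  hence G: "norm (ev_hi y) = 1 \<and> Ret y *v ev_hi y = eig_hi y *\<^sub>R ev_hi y" unfolding ev_hi_def by (rule someI_ex)
  show "norm (ev_lo y) = 1" "Ret y *v ev_lo y = eig_lo y *\<^sub>R ev_lo y"
    "norm (ev_hi y) = 1" "Ret y *v ev_hi y = eig_hi y *\<^sub>R ev_hi y"
    using F G by auto
  have ne: "eig_lo y \<noteq> eig_hi y" using eig_lo_lt_hi[of y] by simp
  obtain c where c: "ev_lo y = c *\<^sub>R u" using eigenvector_collinear[OF uw ne] F by blast
  have d2: "det (cols w u) \<noteq> 0" using uw(3) by (auto simp: det_cols algebra_simps)
  obtain c' where c': "ev_hi y = c' *\<^sub>R w" using eigenvector_collinear[OF uw(2) uw(1) d2 ne[symmetric]] G by blast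
  have "c \<noteq> 0" "c' \<noteq> 0" using c c' F G by auto
  thus "det (cols (ev_lo y) (ev_hi y)) \<noteq> 0" unfolding c c' det_cols_scaleR using uw(3) by simp
qed

definition \<delta> :: real where "\<delta> = sin \<theta>0 / sqrt 2"

lemma \<delta>_pos: "0 < \<delta>" using cos_sin_\<theta>0 by (simp add: \<delta>_def)

lemma det_ev_lo_hi_ge: "\<delta> \<le> \<bar>det (cols (ev_lo y) (ev_hi y))\<bar>"
proof -
  have lh: "0 < eig_lo y" "eig_lo y < eig_hi y" using eig_lo_pos eig_lo_lt_hi by auto
  have "eig_lo y \<le> sqrt (eig_lo y * eig_hi y)"
    using lh real_sqrt_le_mono[of "eig_lo y * eig_lo y" "eig_lo y * eig_hi y"] by simp
  moreover have "(eig_lo y + eig_hi y) * cos \<theta>0 \<le> eig_lo y + eig_hi y"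
    using cos_sin_\<theta>0 lh by (intro mult_left_le) auto
  ultimately have "tr2 (Ret y) * cos \<theta>0 - 2 * sqrt (det (Ret y)) \<le> eig_hi y - eig_lo y"
    by (simp add: tr2_Ret det_Ret)
  hence "\<bar>Ret y $2$1 - Ret y $1$2\<bar> * sin \<theta>0 \<le> eig_hi y - eig_lo y"
    using return_trace_gap[of y] by simp
  thus ?thesis unfolding \<delta>_def
    using det_unit_eigenvectors_ge[OF ev_lo_hi(2,1,4,3) lh(2)] cos_sin_\<theta>0 by simp
qed

lemma eig_ratio_le_cos_sq: "eig_lo y / eig_hi y \<le> (cos \<theta>0)^2"
proof -
  have lh: "0 < eig_lo y" "eig_lo y < eig_hi y" using eig_lo_pos eig_lo_lt_hi by auto
  have c2: "2 * sqrt (det (Ret y)) \<le> tr2 (Ret y) * cos \<theta>0 - \<bar>Ret y $2$1 - Ret y $1$2\<bar> * sin \<theta>0"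
    by (rule return_trace_gap)
  have "0 \<le> \<bar>Ret y $2$1 - Ret y $1$2\<bar> * sin \<theta>0" using cos_sin_\<theta>0 by simp
  hence "2 * sqrt (eig_lo y * eig_hi y) \<le> (eig_lo y + eig_hi y) * cos \<theta>0" using c2 tr2_Ret det_Ret by simp
  also have "\<dots> \<le> (2 * eig_hi y) * cos \<theta>0" using lh cos_sin_\<theta>0 by (intro mult_right_mono) auto
  finally have "sqrt (eig_lo y * eig_hi y) \<le> eig_hi y * cos \<theta>0" by simp
  hence "(sqrt (eig_lo y * eig_hi y))^2 \<le> (eig_hi y * cos \<theta>0)^2"
    using lh by (intro power_mono) auto
  hence "eig_lo y * eig_hi y \<le> eig_hi y^2 * (cos \<theta>0)^2" using lh by (simp add: power_mult_distrib)
  hence "eig_lo y \<le> eig_hi y * (cos \<theta>0)^2" using lh by (simp add: power2_eq_square)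
  thus ?thesis using lh by (simp add: divide_le_eq mult.commute)
qed


definition line_lo :: "'a \<Rightarrow> (real^2) set" where "line_lo y = {v. Ret y *v v = eig_lo y *\<^sub>R v}"
definition line_hi :: "'a \<Rightarrow> (real^2) set" where "line_hi y = {v. Ret y *v v = eig_hi y *\<^sub>R v}"

lemma ev_lo_mem: "ev_lo y \<in> line_lo y" and ev_hi_mem: "ev_hi y \<in> line_hi y"
  using ev_lo_hi by (auto simp: line_lo_def line_hi_def)

lemma ev_lo_nonzero: "ev_lo y \<noteq> 0" and ev_hi_nonzero: "ev_hi y \<noteq> 0"
  using ev_lo_hi(1,3)[of y] by auto

lemma line_lo_collinear: "v \<in> line_lo y \<Longrightarrow> \<exists>c. v = c *\<^sub>R ev_lo y"
  using eigenvector_collinear[OF ev_lo_hi(2) ev_lo_hi(4) ev_lo_hi(5)] eig_lo_lt_hi[of y] by (auto simp: line_lo_def)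

lemma line_hi_collinear: "v \<in> line_hi y \<Longrightarrow> \<exists>c. v = c *\<^sub>R ev_hi y"
proof -
  have d: "det (cols (ev_hi y) (ev_lo y)) \<noteq> 0" using ev_lo_hi(5)[of y] by (auto simp: det_cols algebra_simps)
  assume "v \<in> line_hi y"
  thus ?thesis using eigenvector_collinear[OF ev_lo_hi(4) ev_lo_hi(2) d] eig_lo_lt_hi[of y] by (auto simp: line_hi_def)
qed

lemma Ret_funpow_eigenvector:
  "Ret y *v v = l *\<^sub>R v \<Longrightarrow> Ret ((f^^k) y) *v (Apow k y *v v) = l *\<^sub>R (Apow k y *v v)"
  by (simp add: matrix_vector_mul_assoc Ret_funpow_mult)
    (simp add: matrix_vector_mul_assoc[symmetric] matrix_vector_mult_scaleR)

lemma Apow_line_lo: "v \<in> line_lo y \<Longrightarrow> Apow k y *v v \<in> line_lo ((f^^k) y)"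
  using Ret_funpow_eigenvector by (simp add: line_lo_def eig_lo_hi_funpow)

lemma Apow_line_hi: "v \<in> line_hi y \<Longrightarrow> Apow k y *v v \<in> line_hi ((f^^k) y)"
  using Ret_funpow_eigenvector by (simp add: line_hi_def eig_lo_hi_funpow)

lemma Apow_ev_lo: "\<exists>c. Apow k y *v ev_lo y = c *\<^sub>R ev_lo ((f^^k) y) \<and> \<bar>c\<bar> = norm (Apow k y *v ev_lo y) \<and> c \<noteq> 0"
proof -
  obtain c where c: "Apow k y *v ev_lo y = c *\<^sub>R ev_lo ((f^^k) y)"
    using line_lo_collinear[OF Apow_line_lo[OF ev_lo_mem]] by blast
  have "norm (Apow k y *v ev_lo y) = \<bar>c\<bar>" unfolding c using ev_lo_hi(1) by simp
  moreover have "Apow k y *v ev_lo y \<noteq> 0" by (rule matrix_vector_invertible_nonzero[OF Apow_invertible ev_lo_nonzero])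
  ultimately show ?thesis using c by auto
qed

lemma Apow_ev_hi: "\<exists>c. Apow k y *v ev_hi y = c *\<^sub>R ev_hi ((f^^k) y) \<and> \<bar>c\<bar> = norm (Apow k y *v ev_hi y) \<and> c \<noteq> 0"
proof -
  obtain c where c: "Apow k y *v ev_hi y = c *\<^sub>R ev_hi ((f^^k) y)"
    using line_hi_collinear[OF Apow_line_hi[OF ev_hi_mem]] by blast
  have "norm (Apow k y *v ev_hi y) = \<bar>c\<bar>" unfolding c using ev_lo_hi(3) by simp
  moreover have "Apow k y *v ev_hi y \<noteq> 0" by (rule matrix_vector_invertible_nonzero[OF Apow_invertible ev_hi_nonzero])
  ultimately show ?thesis using c by auto
qed

definition grow_lo :: "nat \<Rightarrow> 'a \<Rightarrow> real" where "grow_lo n y = norm (Apow n y *v ev_lo y)"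
definition grow_hi :: "nat \<Rightarrow> 'a \<Rightarrow> real" where "grow_hi n y = norm (Apow n y *v ev_hi y)"
definition grow_ratio :: "nat \<Rightarrow> 'a \<Rightarrow> real" where "grow_ratio n y = grow_lo n y / grow_hi n y"

lemma grow_lo_pos: "0 < grow_lo n y" and grow_hi_pos: "0 < grow_hi n y"
  using matrix_vector_invertible_nonzero[OF Apow_invertible ev_lo_nonzero]
    matrix_vector_invertible_nonzero[OF Apow_invertible ev_hi_nonzero]
  by (auto simp: grow_lo_def grow_hi_def)

lemma grow_ratio_pos: "0 < grow_ratio n y" using grow_lo_pos grow_hi_pos by (simp add: grow_ratio_def)

lemma norm_Apow_add:
  "Apow a y *v u = c *\<^sub>R u' \<Longrightarrow> norm (Apow (a + b) y *v u) = \<bar>c\<bar> * norm (Apow b ((f^^a) y) *v u')"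
  by (simp add: Apow_add matrix_vector_mul_assoc[symmetric] matrix_vector_mult_scaleR)

lemma grow_lo_add: "grow_lo (a + b) y = grow_lo a y * grow_lo b ((f^^a) y)"
  using Apow_ev_lo[of a y] norm_Apow_add by (metis grow_lo_def)

lemma grow_hi_add: "grow_hi (a + b) y = grow_hi a y * grow_hi b ((f^^a) y)"
  using Apow_ev_hi[of a y] norm_Apow_add by (metis grow_hi_def)

lemma grow_ratio_add: "grow_ratio (a + b) y = grow_ratio a y * grow_ratio b ((f^^a) y)"
  unfolding grow_ratio_def grow_lo_add grow_hi_add by simp

lemma grow_ratio_0: "grow_ratio 0 y = 1"
  using ev_lo_hi(1,3)[of y] by (simp add: grow_ratio_def grow_lo_def grow_hi_def)

lemma grow_ratio_period: "grow_ratio (period f y) y = eig_lo y / eig_hi y"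
proof -
  have "Apow (period f y) y = Ret y" by (simp add: return_map_def)
  thus ?thesis using ev_lo_hi[of y] eig_lo_pos[of y] eig_lo_lt_hi[of y] by (simp add: grow_ratio_def grow_lo_def grow_hi_def)
qed

lemma grow_ratio_periods: "grow_ratio (q * period f y + m) y = (eig_lo y / eig_hi y)^q * grow_ratio m y"
proof (induction q)
  case 0 then show ?case by simp
next
  case (Suc q)
  have "grow_ratio (Suc q * period f y + m) y = grow_ratio (period f y + (q * period f y + m)) y"
    by (simp add: add.assoc)
  also have "\<dots> = grow_ratio (period f y) y * grow_ratio (q * period f y + m) ((f^^period f y) y)"
    by (rule grow_ratio_add)
  also have "\<dots> = (eig_lo y / eig_hi y) * ((eig_lo y / eig_hi y)^q * grow_ratio m y)"
    using Suc funpow_period[of y] grow_ratio_period[of y] by simp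
  finally show ?case by simp
qed

lemma restr_norm_line_lo: "restr_norm B (line_lo y) = norm (B *v ev_lo y)"
  by (rule restr_norm_line[OF line_lo_collinear ev_lo_mem ev_lo_hi(1)])

lemma restr_norm_line_hi: "restr_norm B (line_hi y) = norm (B *v ev_hi y)"
  by (rule restr_norm_line[OF line_hi_collinear ev_hi_mem ev_lo_hi(3)])

lemma restr_norm_prod_eq:
  "restr_norm (Apow n y) (line_lo y) * restr_norm (matrix_inv (Apow n y)) (line_hi ((f^^n) y)) = grow_ratio n y"
proof -
  obtain c where c: "Apow n y *v ev_hi y = c *\<^sub>R ev_hi ((f^^n) y)" "\<bar>c\<bar> = grow_hi n y" "c \<noteq> 0"
    using Apow_ev_hi[of n y] unfolding grow_hi_def by blast
  have "ev_hi ((f^^n) y) = (1/c) *\<^sub>R (Apow n y *v ev_hi y)" using c by simp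
  hence "matrix_inv (Apow n y) *v ev_hi ((f^^n) y) = (1/c) *\<^sub>R ev_hi y"
    by (simp add: matrix_vector_mult_scaleR matrix_vector_mul_assoc matrix_inv_left[OF Apow_invertible])
  hence "norm (matrix_inv (Apow n y) *v ev_hi ((f^^n) y)) = 1 / grow_hi n y" using c ev_lo_hi(3) by simp
  thus ?thesis unfolding restr_norm_line_lo restr_norm_line_hi by (simp add: grow_ratio_def grow_lo_def)
qed

text \<open>The constants are chosen so that the perturbations used in \<open>grow_ratio_le_ratio_max\<close> and
  \<open>grow_ratio_leaves_band\<close> cost less than \<open>\<epsilon>\<close>.\<close>

definition inv_\<delta> :: real where "inv_\<delta> = 1 / \<delta>"
definition ratio_max :: real where "ratio_max = 2 * (4 * K0 * inv_\<delta> / \<epsilon>)^2 + 1"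
definition band :: real where "band = 2 * ratio_max^2"
definition band_time :: nat where "band_time = nat (ceiling (2 * pi * K0 * band * inv_\<delta> / \<epsilon>)) + 1"

lemma inv_\<delta>_pos: "0 < inv_\<delta>" using \<delta>_pos by (simp add: inv_\<delta>_def)
lemma ratio_max_ge1: "1 \<le> ratio_max" by (simp add: ratio_max_def)
lemma band_ge: "2 * ratio_max \<le> band" "1 \<le> band"
proof -
  have "ratio_max \<le> ratio_max^2" using ratio_max_ge1 by (simp add: power2_eq_square)
  thus "2 * ratio_max \<le> band" by (simp add: band_def)
  thus "1 \<le> band" using ratio_max_ge1 by simp
qed

lemma inv_det_le: "1 / \<bar>det (cols (ev_lo y) (ev_hi y))\<bar> \<le> inv_\<delta>"
  unfolding inv_\<delta>_def using det_ev_lo_hi_ge[of y] \<delta>_pos by (simp add: frac_le)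

definition eigenframe :: "'a \<Rightarrow> mat2" where "eigenframe y = cols (ev_lo y) (ev_hi y)"

lemma invertible_eigenframe: "invertible (eigenframe y)"
  using ev_lo_hi(5) by (simp add: eigenframe_def invertible_iff_det)

lemma eigenframe_diagonalizes: "matrix_inv (eigenframe y) ** Ret y ** eigenframe y = M2 (eig_lo y) 0 0 (eig_hi y)"
  unfolding eigenframe_def by (rule cols_diagonalizes[OF ev_lo_hi(2) ev_lo_hi(4) ev_lo_hi(5)])

lemma cond_num_eigenframe_transport:
  fixes k :: nat and y :: 'a
  assumes "s \<noteq> 0"
  defines "\<rho> \<equiv> grow_ratio k y / \<bar>s\<bar>"
  shows "cond_num (Apow k y ** eigenframe y ** M2 1 0 0 s) \<le> (\<rho> + 1 / \<rho>) * inv_\<delta>"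
proof -
  obtain c1 where c1: "Apow k y *v ev_lo y = c1 *\<^sub>R ev_lo ((f^^k) y)" "\<bar>c1\<bar> = grow_lo k y" "c1 \<noteq> 0"
    using Apow_ev_lo[of k y] unfolding grow_lo_def by blast
  obtain c2 where c2: "Apow k y *v ev_hi y = c2 *\<^sub>R ev_hi ((f^^k) y)" "\<bar>c2\<bar> = grow_hi k y" "c2 \<noteq> 0"
    using Apow_ev_hi[of k y] unfolding grow_hi_def by blast
  let ?D = "\<bar>det (cols (ev_lo ((f^^k) y)) (ev_hi ((f^^k) y)))\<bar>"
  have nz: "s * c2 \<noteq> 0" using assms(1) c2 by simp
  have "Apow k y ** eigenframe y ** M2 1 0 0 s = cols (c1 *\<^sub>R ev_lo ((f^^k) y)) ((s * c2) *\<^sub>R ev_hi ((f^^k) y))"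
    unfolding eigenframe_def mult_cols cols_mult_diag using c1(1) c2(1) by simp
  hence "cond_num (Apow k y ** eigenframe y ** M2 1 0 0 s) \<le> (c1^2 + (s * c2)^2) / (\<bar>c1\<bar> * \<bar>s * c2\<bar> * ?D)"
    using cond_num_cols_le[OF ev_lo_hi(1,3) ev_lo_hi(5) c1(3) nz] by simp
  also have "\<dots> = (\<rho> + 1 / \<rho>) * (1 / ?D)"
  proof -
    have "c1^2 = \<bar>c1\<bar> * \<bar>c1\<bar>" "(s * c2)^2 = \<bar>s * c2\<bar> * \<bar>s * c2\<bar>"
      by (simp_all add: power2_eq_square abs_mult_self_eq)
    thus ?thesis using c1 c2 assms(1) ev_lo_hi(5)[of "(f^^k) y"]
      by (simp add: \<rho>_def grow_ratio_def abs_mult field_simps)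
  qed
  also have "\<dots> \<le> (\<rho> + 1 / \<rho>) * inv_\<delta>"
    using inv_det_le grow_ratio_pos[of k y] assms(1) by (intro mult_left_mono) (simp_all add: \<rho>_def)
  finally show ?thesis .
qed

lemma cond_num_eigenframe: "cond_num (eigenframe y) \<le> 2 * inv_\<delta>"
  using cond_num_eigenframe_transport[of 1 0 y] by (simp add: grow_ratio_0 mat1_M2[symmetric])

text \<open>Otherwise the shear of \<open>shear_rotation_admissible\<close> with \<open>\<sigma>\<close> the growth ratio would be admissible.\<close>

lemma grow_ratio_le_ratio_max:
  assumes m: "0 < m" "m < period f y"
  shows "grow_ratio m y \<le> ratio_max"
proof (rule ccontr)
  assume H: "\<not> grow_ratio m y \<le> ratio_max"
  interpret P: periodic_point f y by (rule periodic_point)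
  define \<sigma> where "\<sigma> = grow_ratio m y"
  have \<sigma>: "0 < \<sigma>" "ratio_max < \<sigma>" using grow_ratio_pos H by (auto simp: \<sigma>_def)
  have cond: "cond_num (cocycle_pow A f m y ** eigenframe y ** M2 1 0 0 \<sigma>) \<le> 2 * inv_\<delta>"
    using cond_num_eigenframe_transport[of \<sigma> m y] \<sigma> by (simp add: \<sigma>_def)
  have small: "K0 * (2 * (2 * inv_\<delta>) * sqrt (2 / \<sigma>)) < \<epsilon>"
  proof -
    define z where "z = 4 * K0 * inv_\<delta> / \<epsilon>"
    have z0: "0 < z" using K0 inv_\<delta>_pos \<epsilon> by (simp add: z_def)
    have "2 * z^2 < \<sigma>" using \<sigma> by (simp add: ratio_max_def z_def)
    hence "2 / \<sigma> < 1 / z^2" using \<sigma> z0 by (simp add: field_simps)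
    hence "sqrt (2 / \<sigma>) < sqrt (1 / z^2)" by (rule real_sqrt_less_mono)
    hence "sqrt (2 / \<sigma>) < 1 / z" using z0 by (simp add: real_sqrt_divide)
    hence "4 * K0 * inv_\<delta> * sqrt (2 / \<sigma>) < 4 * K0 * inv_\<delta> * (1 / z)"
      by (rule mult_strict_left_mono) (use K0 inv_\<delta>_pos in simp)
    also have "\<dots> = \<epsilon>" using K0 inv_\<delta>_pos \<epsilon> by (simp add: z_def)
    finally show ?thesis by (simp add: algebra_simps)
  qed
  have "\<exists>\<gamma>. admissible_path f A \<epsilon> y \<gamma>"
    by (rule P.shear_rotation_admissible[OF Ainv Abound m invertible_eigenframe eigenframe_diagonalizes
          eig_lo_pos eig_lo_le_hi \<sigma>(1) cond_num_eigenframe cond small])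
  thus False using no_admissible by blast
qed

text \<open>Otherwise a quarter turn spread over \<open>n\<close> steps in the transported eigenframe would be admissible.\<close>

lemma grow_ratio_leaves_band:
  assumes n: "band_time \<le> n" "n \<le> period f y"
    and band: "\<And>k. k < n \<Longrightarrow> 1 / band \<le> grow_ratio k y \<and> grow_ratio k y \<le> band"
  shows False
proof -
  interpret P: periodic_point f y by (rule periodic_point)
  have n1: "1 \<le> n" using n by (simp add: band_time_def)
  have cond: "cond_num (cocycle_pow A f k y ** eigenframe y) \<le> 2 * band * inv_\<delta>" if k: "k < n" for k
  proof -
    have b: "1 / band \<le> grow_ratio k y" "grow_ratio k y \<le> band" using band[OF k] by auto
    have "1 / grow_ratio k y \<le> band"
      using b grow_ratio_pos[of k y] band_ge by (simp add: divide_le_eq mult.commute)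
    hence "grow_ratio k y + 1 / grow_ratio k y \<le> 2 * band" using b by simp
    thus ?thesis using cond_num_eigenframe_transport[of 1 k y] inv_\<delta>_pos
      by (simp add: mat1_M2[symmetric]) (smt (verit) mult_right_mono)
  qed
  have small: "K0 * (2 * (2 * band * inv_\<delta>) * ((pi/2) / real n)) < \<epsilon>"
  proof -
    have "2 * pi * K0 * band * inv_\<delta> / \<epsilon> < real band_time"
      unfolding band_time_def by linarith
    also have "\<dots> \<le> real n" using n by simp
    finally have "2 * pi * K0 * band * inv_\<delta> < \<epsilon> * real n" using \<epsilon> by (simp add: divide_less_eq mult.commute)
    thus ?thesis using n1 by (simp add: field_simps)
  qed
  have "0 < eig_lo y * eig_hi y" using eig_lo_pos[of y] eig_lo_le_hi[of y] by (simp add: mult_pos_pos)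
  hence "\<exists>\<gamma>. admissible_path f A \<epsilon> y \<gamma>"
    using P.spread_rotation_admissible[OF Ainv Abound n1 n(2) invertible_eigenframe cond _ _ small]
      eig_lo_pos[of y] eig_lo_le_hi[of y]
    by (simp add: eigenframe_diagonalizes tr2_Ret det_Ret)
  thus False using no_admissible by blast
qed

lemma eig_ratio_bounds: "0 < eig_lo y / eig_hi y" "eig_lo y / eig_hi y \<le> 1" "eig_lo y / eig_hi y \<le> (cos \<theta>0)^2"
  using eig_lo_pos[of y] eig_lo_le_hi[of y] eig_ratio_le_cos_sq[of y] by auto

lemma grow_ratio_le: "grow_ratio k z \<le> ratio_max"
proof -
  define p where "p = period f z"
  have p: "0 < p" using period_pos by (simp add: p_def)
  have k: "k = (k div p) * p + k mod p" by simp
  have "grow_ratio k z = (eig_lo z / eig_hi z)^(k div p) * grow_ratio (k mod p) z"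
    using grow_ratio_periods[of "k div p" z "k mod p"] k by (simp add: p_def)
  also have "\<dots> \<le> 1 * ratio_max"
  proof (rule mult_mono)
    show "(eig_lo z / eig_hi z)^(k div p) \<le> 1" using eig_ratio_bounds[of z] by (simp add: power_le_one)
    show "grow_ratio (k mod p) z \<le> ratio_max"
    proof (cases "k mod p = 0")
      case True thus ?thesis using grow_ratio_0 ratio_max_ge1 by simp
    next
      case False
      thus ?thesis using grow_ratio_le_ratio_max[of "k mod p" z] p by (simp add: p_def)
    qed
    show "0 \<le> (1::real)" by simp
    show "0 \<le> grow_ratio (k mod p) z" using grow_ratio_pos[of "k mod p" z] by simp
  qed
  finally show ?thesis by simp
qed

lemma grow_ratio_lower: "k \<le> N \<Longrightarrow> grow_ratio N x / ratio_max \<le> grow_ratio k x"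
proof -
  assume "k \<le> N"
  hence "grow_ratio N x = grow_ratio k x * grow_ratio (N - k) ((f^^k) x)"
    using grow_ratio_add[of k "N - k" x] by simp
  also have "\<dots> \<le> grow_ratio k x * ratio_max"
    using grow_ratio_le grow_ratio_pos by (intro mult_left_mono) (auto intro: less_imp_le)
  finally show ?thesis using ratio_max_ge1 by (simp add: divide_le_eq)
qed

lemma cos_sq_\<theta>0: "(cos \<theta>0)^2 < 1" "0 \<le> (cos \<theta>0)^2"
  using cos_sin_\<theta>0 by (auto simp: power_less_one_iff abs_less_iff)

definition decay_periods :: nat where "decay_periods = (SOME q. ((cos \<theta>0)^2)^q < 1 / (2 * ratio_max))"

lemma decay_periods: "((cos \<theta>0)^2)^decay_periods < 1 / (2 * ratio_max)"
proof -
  have "\<exists>q. ((cos \<theta>0)^2)^q < 1 / (2 * ratio_max)"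
    using real_arch_pow_inv[of "1 / (2 * ratio_max)" "(cos \<theta>0)^2"] cos_sq_\<theta>0 ratio_max_ge1 by simp
  thus ?thesis unfolding decay_periods_def by (rule someI_ex)
qed

definition dom_time :: nat where "dom_time = band_time * (decay_periods + 1)"

lemma dom_time: "band_time \<le> dom_time" "1 \<le> dom_time" "1 \<le> band_time"
  by (auto simp: dom_time_def band_time_def)

lemma grow_ratio_in_band:
  assumes "1 / (2 * ratio_max) \<le> grow_ratio N x" "k \<le> N"
  shows "1 / band \<le> grow_ratio k x \<and> grow_ratio k x \<le> band"
proof
  have "1 / band = 1 / (2 * ratio_max) / ratio_max"
    using ratio_max_ge1 by (simp add: band_def power2_eq_square)
  also have "\<dots> \<le> grow_ratio N x / ratio_max"
    by (rule divide_right_mono) (use assms(1) ratio_max_ge1 in auto)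
  also have "\<dots> \<le> grow_ratio k x" by (rule grow_ratio_lower[OF assms(2)])
  finally show "1 / band \<le> grow_ratio k x" .
  show "grow_ratio k x \<le> band" using grow_ratio_le[of k x] band_ge by simp
qed

lemma eig_ratio_power_ge:
  assumes "1/2 \<le> grow_ratio N x"
  shows "1 / (2 * ratio_max) \<le> (eig_lo x / eig_hi x)^(N div period f x)"
proof -
  have "grow_ratio N x = (eig_lo x / eig_hi x)^(N div period f x) * grow_ratio (N mod period f x) x"
    using grow_ratio_periods[of "N div period f x" x "N mod period f x"] by (metis div_mult_mod_eq)
  also have "\<dots> \<le> (eig_lo x / eig_hi x)^(N div period f x) * ratio_max"
    using eig_ratio_bounds[of x] grow_ratio_le by (intro mult_left_mono) auto
  finally have "1/2 \<le> (eig_lo x / eig_hi x)^(N div period f x) * ratio_max" using assms by simp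
  hence "(1/2) / ratio_max \<le> (eig_lo x / eig_hi x)^(N div period f x) * ratio_max / ratio_max"
    using ratio_max_ge1 by (intro divide_right_mono) auto
  thus ?thesis using ratio_max_ge1 by simp
qed

text \<open>If the period is long, the ratio leaves the band within the period; if it is short, the
  contraction \<open>(cos \<theta>0)\<^sup>2\<close> per period takes over.\<close>

lemma grow_ratio_dom_time: "grow_ratio dom_time x < 1/2"
proof (rule ccontr)
  assume "\<not> grow_ratio dom_time x < 1/2"
  hence H: "1/2 \<le> grow_ratio dom_time x" by simp
  define p where "p = period f x"
  have p: "0 < p" using period_pos by (simp add: p_def)
  show False
  proof (cases "dom_time \<le> p")
    case True
    have "1 / (2 * ratio_max) \<le> 1 / 2" by (rule frac_le) (use ratio_max_ge1 in auto)
    hence "1 / (2 * ratio_max) \<le> grow_ratio dom_time x" using H by linarith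
    thus False using grow_ratio_leaves_band[of dom_time x] grow_ratio_in_band dom_time True
      by (simp add: p_def)
  next
    case False
    define l where "l = eig_lo x / eig_hi x"
    define q where "q = dom_time div p"
    have "1 \<le> q" using False p div_le_mono[of p dom_time p] by (simp add: q_def)
    moreover have lq: "1 / (2 * ratio_max) \<le> l^q" using eig_ratio_power_ge[OF H] by (simp add: l_def q_def p_def)
    ultimately have "1 / (2 * ratio_max) \<le> grow_ratio p x"
      using power_decreasing[of 1 q l] eig_ratio_bounds[of x] grow_ratio_period[of x] by (simp add: l_def p_def)
    hence "\<not> band_time \<le> p" using grow_ratio_leaves_band[of p x] grow_ratio_in_band by (auto simp: p_def)
    hence "decay_periods + 1 \<le> q"
      using div_le_mono2[of p band_time dom_time] p by (simp add: q_def dom_time_def)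
    have "l^q \<le> ((cos \<theta>0)^2)^q" using eig_ratio_bounds[of x] by (intro power_mono) (auto simp: l_def)
    also have "\<dots> \<le> ((cos \<theta>0)^2)^decay_periods"
      using cos_sq_\<theta>0 \<open>decay_periods + 1 \<le> q\<close> by (intro power_decreasing) auto
    finally have "l^q \<le> ((cos \<theta>0)^2)^decay_periods" .
    thus False using lq decay_periods by simp
  qed
qed

lemma subspace_line_lo: "subspace (line_lo y)" and subspace_line_hi: "subspace (line_hi y)"
  by (auto simp: subspace_def line_lo_def line_hi_def matrix_vector_right_distrib matrix_vector_mult_scaleR algebra_simps)

lemma A_image_eigenspace:
  "(\<lambda>v. A y *v v) ` {v. Ret y *v v = l *\<^sub>R v} = {v. Ret (f y) *v v = l *\<^sub>R v}"
proof
  show "(\<lambda>v. A y *v v) ` {v. Ret y *v v = l *\<^sub>R v} \<subseteq> {v. Ret (f y) *v v = l *\<^sub>R v}"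
    using Ret_funpow_eigenvector[of y _ l 1] by auto
  show "{v. Ret (f y) *v v = l *\<^sub>R v} \<subseteq> (\<lambda>v. A y *v v) ` {v. Ret y *v v = l *\<^sub>R v}"
  proof
    fix w assume w: "w \<in> {v. Ret (f y) *v v = l *\<^sub>R v}"
    have "Ret y = matrix_inv (A y) ** Ret (f y) ** A y"
      using Ret_funpow_mult[of 1 y] by (simp add: matrix_mul_assoc[symmetric] matrix_inv_cancel_left[OF Ainv])
    hence "matrix_inv (A y) *v w \<in> {v. Ret y *v v = l *\<^sub>R v}"
      using w by (simp add: matrix_vector_mul_assoc[symmetric] matrix_vector_mult_scaleR matrix_inv_vector_cancel[OF Ainv])
    moreover have "w = A y *v (matrix_inv (A y) *v w)" by (simp add: matrix_inv_vector_cancel[OF Ainv])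
    ultimately show "w \<in> (\<lambda>v. A y *v v) ` {v. Ret y *v v = l *\<^sub>R v}" by blast
  qed
qed

lemma A_image_line_lo: "(\<lambda>v. A y *v v) ` line_lo y = line_lo (f y)"
  using A_image_eigenspace eig_lo_hi_funpow[of 1 y] by (simp add: line_lo_def)

lemma A_image_line_hi: "(\<lambda>v. A y *v v) ` line_hi y = line_hi (f y)"
  using A_image_eigenspace eig_lo_hi_funpow[of 1 y] by (simp add: line_hi_def)

lemma splitting_line_lo_hi:
  "subspace (line_lo x)" "subspace (line_hi x)" "line_lo x \<noteq> {0}" "line_hi x \<noteq> {0}" "line_lo x \<inter> line_hi x = {0}"
  "\<forall>v. \<exists>u\<in>line_lo x. \<exists>w\<in>line_hi x. v = u + w"
proof -
  show "subspace (line_lo x)" "subspace (line_hi x)" by (rule subspace_line_lo, rule subspace_line_hi)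
  show "line_lo x \<noteq> {0}" using ev_lo_mem[of x] ev_lo_nonzero[of x] by auto
  show "line_hi x \<noteq> {0}" using ev_hi_mem[of x] ev_hi_nonzero[of x] by auto
  show "line_lo x \<inter> line_hi x = {0}"
  proof
    show "line_lo x \<inter> line_hi x \<subseteq> {0}"
    proof
      fix v assume "v \<in> line_lo x \<inter> line_hi x"
      hence "eig_lo x = eig_hi x \<or> v = 0" by (auto simp: line_lo_def line_hi_def)
      thus "v \<in> {0}" using eig_lo_lt_hi[of x] by auto
    qed
    show "{0} \<subseteq> line_lo x \<inter> line_hi x" by (simp add: line_lo_def line_hi_def)
  qed
  show "\<forall>v. \<exists>u\<in>line_lo x. \<exists>w\<in>line_hi x. v = u + w"
  proof
    fix v :: "real^2"
    obtain a b where ab: "v = a *\<^sub>R ev_lo x + b *\<^sub>R ev_hi x" using cols_coordinates[OF ev_lo_hi(5)] by blast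
    have "a *\<^sub>R ev_lo x \<in> line_lo x" "b *\<^sub>R ev_hi x \<in> line_hi x"
      using ev_lo_mem ev_hi_mem subspace_line_lo subspace_line_hi by (auto simp: subspace_def)
    thus "\<exists>u\<in>line_lo x. \<exists>w\<in>line_hi x. v = u + w" using ab by blast
  qed
qed

lemma dominated_line_lo_hi: "\<exists>n\<ge>1. \<forall>x. restr_norm (cocycle_pow A f n x) (line_lo x) *
          restr_norm (matrix_inv (cocycle_pow A f n x)) (line_hi ((f ^^ n) x)) < 1 / 2"
proof (intro exI[of _ dom_time] conjI allI)
  show "1 \<le> dom_time" by (rule dom_time(2))
  fix x
  show "restr_norm (cocycle_pow A f dom_time x) (line_lo x) *
        restr_norm (matrix_inv (cocycle_pow A f dom_time x)) (line_hi ((f ^^ dom_time) x)) < 1 / 2"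
    using restr_norm_prod_eq[of dom_time x] grow_ratio_dom_time[of x] by simp
qed

lemma dominated_splitting_holds: "dominated_splitting f A"
  unfolding dominated_splitting_def
  using splitting_line_lo_hi A_image_line_lo A_image_line_hi dominated_line_lo_hi by blast

end


theorem lemma3p8:
  fixes K \<epsilon> :: real and f :: "'a::topological_space \<Rightarrow> 'a" and A :: "'a \<Rightarrow> mat2"
  assumes "K > 0" and "\<epsilon> > 0"
    and "is_linear_cocycle f A"
    and "periodic_map f"
    and "diagonalizable_pos f A"
    and "bounded_by A K"
    and "\<not> dominated_splitting f A"
  shows "\<exists>X \<gamma>. C_path f X \<gamma>
           \<and> (\<forall>x\<in>orbit f X. \<gamma> 0 x = A x)
           \<and> C_diam f X \<gamma> < \<epsilon>
           \<and> (\<forall>s\<in>{0..1}. \<forall>t\<in>{0..1}. det (return_map f (\<gamma> s) X) = det (return_map f (\<gamma> t) X))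
           \<and> (\<forall>s\<in>{0..1}. \<forall>t\<in>{0..1}. s < t \<longrightarrow>
                 lam_m (return_map f (\<gamma> s) X) \<le> lam_m (return_map f (\<gamma> t) X)
               \<and> lam_b (return_map f (\<gamma> s) X) \<ge> lam_b (return_map f (\<gamma> t) X))
           \<and> (\<exists>z w. z \<in> cx_eigenvalues (return_map f (\<gamma> 1) X) \<and> w \<in> cx_eigenvalues (return_map f (\<gamma> 1) X)
                 \<and> z \<noteq> w \<and> Im z \<noteq> 0 \<and> Im w \<noteq> 0)"
proof -
  obtain K1 K2 where K: "\<And>x. opnorm (A x) \<le> K1" "\<And>x. opnorm (matrix_inv (A x)) \<le> K2"
    using assms(6) unfolding bounded_by_def by blast
  define K0 where "K0 = max (max K1 K2) 1"
  have K0: "opnorm (A x) \<le> K0" "opnorm (matrix_inv (A x)) \<le> K0" for x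
    using K[of x] unfolding K0_def by (meson max.coboundedI1 max.coboundedI2 order_trans)+
  have Ainv: "\<And>x. invertible (A x)" using assms(3) unfolding is_linear_cocycle_def by blast
  have "\<exists>X \<gamma>. admissible_path f A \<epsilon> X \<gamma>"
  proof (rule ccontr)
    assume "\<nexists>X \<gamma>. admissible_path f A \<epsilon> X \<gamma>"
    then interpret no_admissible_path f A K0 \<epsilon>
      using assms(2,4,5) Ainv K0 by unfold_locales (auto simp: K0_def)
    show False using dominated_splitting_holds assms(7) by blast
  qed
  thus ?thesis unfolding admissible_path_def .
qed

end
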